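(* Let $\Omega$, $\mathbb{K}$, $g$ be as in the context, and assume that for every $\omega\in\Omega$ there is $z\in\mathbb{K}$ with $z(0)=\omega$. For $\varrho\in\mathfrak{D}$ and $\omega\in\Omega$ let $\mathcal{V}[\varrho](\omega):=\sup_{z\in\mathbb{K},\,z(0)=\omega}\int_0^\infty\varrho(t)g(z(t))dt$. Suppose that for all $\omega\in\Omega$, $\varrho\in\mathfrak{D}$ and $T>0$, $$\mathcal{V}[\varrho](\omega)=\sup_{z\in\mathbb{K},z(0)=\omega}\Big[\int_0^T\varrho(t)g(z(t))dt+\sup_{z_1\in\mathbb{K},z_1(0)=z(T)}\int_0^\infty\varrho(t+T)g(z_1(t))dt\Big].$$ Then for every function $U_*:\Omega\to\mathbb{R}$ the following conditions are equivalent: (c) for every density $\mu\in\mathfrak{D}$ piecewise continuous on $(0,\infty)$, $\lim_{\lambda\to+0}\sup_{\omega}|\mathcal{V}[\mu^\lambda_{\mathrm{scale}}](\omega)-U_*(\omega)|=0$; (u) $\lim_{T\to+\infty}\sup_\omega|\mathcal{V}[\varpi_T](\omega)-U_*(\omega)|=0$; (e) $\lim_{\lambda\to+0}\sup_\omega|\mathcal{V}[\pi_\lambda](\omega)-U_*(\omega)|=0$; (p) for some power density $\varrho\in\mathfrak{D}$, $\lim_{T\to+\infty}\sup_\omega|\mathcal{V}[\varrho^T_{\mathrm{shift}}](\omega)-U_*(\omega)|=0$; (q) this holds for every power density $\varrho\in\mathfrak{D}$. Moreover, if for some $\mu\in\mathfrak{D}$ piecewise continuous on $(0,\infty)$ and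 some power density $\varrho$ one of the limits $\lim_{T\to\infty}\mathcal{V}[\varpi_T]$, $\lim_{\lambda\to+0}\mathcal{V}[\pi_\lambda]$, $\lim_{T\to\infty}\mathcal{V}[\varrho^T_{\mathrm{shift}}]$ exists uniformly on $\Omega$, then these and $\lim_{\lambda\to+0}\mathcal{V}[\mu^\lambda_{\mathrm{scale}}]$ all exist uniformly on $\Omega$, coincide and do not depend on the choice of $\mu$ and $\varrho$.
   Context: $\mathbb{R}_+=[0,\infty)$. $\Omega$ is a nonempty set, $\mathbb{K}$ a nonempty set of maps $\mathbb{R}_+\to\Omega$, $g:\Omega\to[0,1]$ with $t\mapsto g(z(t))$ Lebesgue measurable for each $z\in\mathbb{K}$. $\mathfrak{D}$: probability densities $\varrho:\mathbb{R}_+\to\mathbb{R}_+$. For $T>0$ with $\int_T^\infty\varrho>0$: $\varrho^T_{\mathrm{shift}}(t)=\varrho(t+T)/\int_T^\infty\varrho$; for $\lambda>0$: $\varrho^\lambda_{\mathrm{scale}}(t)=\lambda\varrho(\lambda t)$. $\varpi_T(t)=\frac1T1_{[0,T]}(t)$, $\pi_\lambda(t)=\lambda e^{-\lambda t}$. A power density is $\varrho\in\mathfrak{D}$ with $\varrho(t)=(\alpha+\beta t)^{-\gamma}$ for some $\alpha,\beta,\gamma>0$. *)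

theory Defs
  imports "HOL-Analysis.Analysis"
begin

text \<open>Probability densities on [0,\<infinity>) (values at negative arguments are irrelevant).\<close>
definition densities :: "(real \<Rightarrow> real) set" where
  "densities = {\<rho>. (\<forall>t\<ge>0. 0 \<le> \<rho> t) \<and> set_integrable lebesgue {0..} \<rho>
                   \<and> (LINT t:{0..}|lebesgue. \<rho> t) = 1}"

definition rho_shift :: "(real \<Rightarrow> real) \<Rightarrow> real \<Rightarrow> real \<Rightarrow> real" where
  "rho_shift \<rho> T = (\<lambda>t. \<rho> (t + T) / (LINT s:{T..}|lebesgue. \<rho> s))"

definition rho_scale :: "(real \<Rightarrow> real) \<Rightarrow> real \<Rightarrow> real \<Rightarrow> real" where
  "rho_scale \<rho> l = (\<lambda>t. l * \<rho> (l * t))"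

definition varpi :: "real \<Rightarrow> real \<Rightarrow> real" where
  "varpi T = (\<lambda>t. (1 / T) * indicator {0..T} t)"

definition pi_exp :: "real \<Rightarrow> real \<Rightarrow> real" where
  "pi_exp l = (\<lambda>t. l * exp (- l * t))"

definition power_density :: "(real \<Rightarrow> real) \<Rightarrow> bool" where
  "power_density \<rho> \<longleftrightarrow> \<rho> \<in> densities \<and>
     (\<exists>\<alpha> \<beta> \<gamma>. \<alpha> > 0 \<and> \<beta> > 0 \<and> \<gamma> > 0 \<and> (\<forall>t\<ge>0. \<rho> t = (\<alpha> + \<beta> * t) powr (- \<gamma>)))"

definition piecewise_continuous_pos :: "(real \<Rightarrow> real) \<Rightarrow> bool" where
  "piecewise_continuous_pos \<mu> \<longleftrightarrow>
     (\<forall>a b. 0 < a \<longrightarrow> finite {t \<in> {a..b}. \<not> isCont \<mu> t}) \<and>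
     (\<forall>t>0. (\<exists>l. (\<mu> \<longlongrightarrow> l) (at_left t)) \<and> (\<exists>l. (\<mu> \<longlongrightarrow> l) (at_right t)))"

definition val :: "(real \<Rightarrow> 'w) set \<Rightarrow> ('w \<Rightarrow> real) \<Rightarrow> (real \<Rightarrow> real) \<Rightarrow> 'w \<Rightarrow> real" where
  "val K g \<rho> \<omega> = (SUP z \<in> {z \<in> K. z 0 = \<omega>}. (LINT t:{0..}|lebesgue. \<rho> t * g (z t)))"

end

(* A candidate limit U is characterised by two estimates along trajectories: every time window
   [a, a + L] carries payoff at most L (U (z 0) + e) + A_e, and for every long horizon T some
   trajectory from \<omega> collects at least T (U \<omega> - e) on [0, T].  The dynamic programming
   principle applied to delayed densities shows that the uniform Cesaro limit satisfies both (and
   is nonincreasing along trajectories), and conversely the two estimates give the Cesaro limit.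
   They also give the uniform limit of V[\<mu> scaled by \<lambda>] for every piecewise continuous
   density \<mu>, by approximating \<mu> in L1 by step functions; in the other direction, convergence for
   one nonincreasing density with \<mu> 1 > 0 already implies both estimates, by an Abel summation
   over a grid.  Finally \<pi>_\<lambda> and \<varpi>_T are rescalings of \<pi>_1 and \<varpi>_1, and shifts of
   a power density are rescalings of it. *)

theory Submission
  imports Defs "HOL-Real_Asymp.Real_Asymp"
begin

lemma AE_lebesgue_not_in_finite: "finite E \<Longrightarrow> AE x in lebesgue. (x::real) \<notin> E"
  by (rule AE_I'[of E]) (auto intro: null_sets_completionI finite_imp_null_set_lborel)

(* Trajectory payoffs and densities are extended by zero to the whole real line, so that all
   integrals are plain Lebesgue integrals over \<real>. *)
definition reward :: "('w \<Rightarrow> real) \<Rightarrow> (real \<Rightarrow> 'w) \<Rightarrow> real \<Rightarrow> real" where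
  "reward g z t = indicator {0..} t * g (z t)"

definition weight :: "(real \<Rightarrow> real) \<Rightarrow> real \<Rightarrow> real" where
  "weight \<rho> t = indicator {0..} t * \<rho> t"

definition weighted_payoff :: "('w \<Rightarrow> real) \<Rightarrow> (real \<Rightarrow> real) \<Rightarrow> (real \<Rightarrow> 'w) \<Rightarrow> real" where
  "weighted_payoff g w z = integral\<^sup>L lebesgue (\<lambda>t. w t * reward g z t)"

lemma densities_iff_weight: "\<rho> \<in> densities \<longleftrightarrow>
   (\<forall>t\<ge>0. 0 \<le> \<rho> t) \<and> integrable lebesgue (weight \<rho>) \<and> integral\<^sup>L lebesgue (weight \<rho>) = 1"
  unfolding densities_def set_integrable_def set_lebesgue_integral_def weight_def
  by simp

lemma val_eq_SUP_payoff: "val K g \<rho> \<omega> = (SUP z \<in> {z \<in> K. z 0 = \<omega>}. weighted_payoff g (weight \<rho>) z)"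
  unfolding val_def weighted_payoff_def set_lebesgue_integral_def weight_def reward_def
  by (intro SUP_cong refl Bochner_Integration.integral_cong) (auto simp: indicator_def)

lemma val_cong: "(\<And>t. t \<ge> 0 \<Longrightarrow> \<rho>1 t = \<rho>2 t) \<Longrightarrow> val K g \<rho>1 = val K g \<rho>2"
proof -
  assume h: "\<And>t. t \<ge> 0 \<Longrightarrow> \<rho>1 t = \<rho>2 t"
  have "weight \<rho>1 = weight \<rho>2" using h by (auto simp: weight_def indicator_def fun_eq_iff)
  then show ?thesis by (intro ext) (simp add: val_eq_SUP_payoff)
qed

lemma weight_nonneg: "\<rho> \<in> densities \<Longrightarrow> 0 \<le> weight \<rho> t"
  by (auto simp: densities_iff_weight weight_def indicator_def)

lemma integrable_weight: "\<rho> \<in> densities \<Longrightarrow> integrable lebesgue (weight \<rho>)"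
  by (simp add: densities_iff_weight)

lemma integral_indicator_atLeastAtMost:
  fixes a b :: real
  assumes "a \<le> b"
  shows "integrable lebesgue (indicator {a..b} :: real \<Rightarrow> real)"
        "integral\<^sup>L lebesgue (indicator {a..b} :: real \<Rightarrow> real) = b - a"
  using assms by (auto intro!: integrable_real_indicator)

lemma integral_indicator_atLeastLessThan:
  fixes a b :: real
  assumes "a \<le> b"
  shows "integrable lebesgue (indicator {a..<b} :: real \<Rightarrow> real)"
        "integral\<^sup>L lebesgue (indicator {a..<b} :: real \<Rightarrow> real) = b - a"
  using assms by (auto intro!: integrable_real_indicator)

lemma sum_indicator_grid:
  assumes "\<Delta> > 0"
  shows "(\<Sum>i<m. indicator {real i * \<Delta>..<real (Suc i) * \<Delta>} t) = (indicator {0..<real m * \<Delta>} t :: real)"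
proof (induction m)
  case 0 then show ?case by simp
next
  case (Suc m)
  have "indicator {0..<real m * \<Delta>} t + indicator {real m * \<Delta>..<real (Suc m) * \<Delta>} t
      = (indicator {0..<real (Suc m) * \<Delta>} t :: real)"
  proof -
    have h: "0 \<le> \<Delta> * real m" using assms by simp
    show ?thesis unfolding indicator_def of_bool_def
      using h assms by (auto simp: algebra_simps dest: order.trans[OF h])
  qed
  then show ?case using Suc by simp
qed

lemma uniform_limit_eventually_abs_less:
  fixes f :: "'a \<Rightarrow> 'b \<Rightarrow> real" and U :: "'b \<Rightarrow> real" and e :: real
  assumes "uniform_limit UNIV f U F" "e > 0"
  shows "eventually (\<lambda>s. \<forall>\<omega>. \<bar>f s \<omega> - U \<omega>\<bar> < e) F"
proof -
  have "\<forall>\<^sub>F s in F. \<forall>x\<in>UNIV. dist (f s x) (U x) < (e::real)" using assms unfolding uniform_limit_iff by auto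
  then show ?thesis by (simp add: dist_real_def)
qed

lemma tail_integral_small:
  fixes h :: "real \<Rightarrow> real"
  assumes h: "integrable lebesgue h" and e: "e > 0"
  shows "\<exists>L0. \<forall>L\<ge>L0. \<bar>integral\<^sup>L lebesgue (\<lambda>x. indicator {L..} x * h x)\<bar> < e"
proof -
  have "((\<lambda>L. integral\<^sup>L lebesgue (\<lambda>x. indicator {L..} x * h x)) \<longlongrightarrow> integral\<^sup>L lebesgue (\<lambda>x::real. 0::real)) at_top"
  proof (rule integral_dominated_convergence_at_top[where w="\<lambda>x. \<bar>h x\<bar>"])
    show "(\<lambda>x. indicator {L..} x * h x) \<in> borel_measurable lebesgue" for L
      using h by (intro borel_measurable_times borel_measurable_indicator borel_measurable_integrable) auto
    show "integrable lebesgue (\<lambda>x. \<bar>h x\<bar>)" using h by simp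
    show "AE x in lebesgue. ((\<lambda>L. indicator {L..} x * h x) \<longlongrightarrow> 0) at_top"
    proof (intro AE_I2)
      fix x
      have "eventually (\<lambda>L. indicator {L..} x * h x = (0::real)) at_top"
        using eventually_gt_at_top[of x] by eventually_elim (auto simp: indicator_def)
      then show "((\<lambda>L. indicator {L..} x * h x) \<longlongrightarrow> 0) at_top"
        by (rule tendsto_eventually)
    qed
    show "\<forall>\<^sub>F L in at_top. AE x in lebesgue. norm (indicator {L..} x * h x) \<le> \<bar>h x\<bar>"
      by (auto simp: indicator_def)
  qed simp
  then have "((\<lambda>L. integral\<^sup>L lebesgue (\<lambda>x. indicator {L..} x * h x)) \<longlongrightarrow> 0) at_top" by simp
  from tendstoD[OF this e] show ?thesis
    by (auto simp: eventually_at_top_linorder dist_real_def)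
qed

lemma head_integral_small:
  fixes h :: "real \<Rightarrow> real"
  assumes h: "integrable lebesgue h" and e: "e > 0"
  shows "\<exists>d>0. \<bar>integral\<^sup>L lebesgue (\<lambda>x. indicator {0..<d} x * h x)\<bar> < e"
proof -
  have "((\<lambda>L. integral\<^sup>L lebesgue (\<lambda>x. indicator {0..<inverse L} x * h x)) \<longlongrightarrow> integral\<^sup>L lebesgue (\<lambda>x::real. 0::real)) at_top"
  proof (rule integral_dominated_convergence_at_top[where w="\<lambda>x. \<bar>h x\<bar>"])
    show "(\<lambda>x. indicator {0..<inverse L} x * h x) \<in> borel_measurable lebesgue" for L
      using h by (intro borel_measurable_times borel_measurable_indicator borel_measurable_integrable) auto
    show "integrable lebesgue (\<lambda>x. \<bar>h x\<bar>)" using h by simp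
    show "AE x in lebesgue. ((\<lambda>L. indicator {0..<inverse L} x * h x) \<longlongrightarrow> 0) at_top"
      using AE_lebesgue_not_in_finite[of "{0::real}", OF finite.insertI[OF finite.emptyI]]
    proof eventually_elim
      fix x :: real assume x: "x \<notin> {0}"
      have "eventually (\<lambda>L. indicator {0..<inverse L} x * h x = (0::real)) at_top"
      proof (cases "x > 0")
        case True
        show ?thesis using eventually_gt_at_top[of "inverse x"]
        proof eventually_elim
          fix L assume "inverse x < L"
          then have "inverse L < x" using True
            by (metis inverse_inverse_eq inverse_less_imp_less positive_imp_inverse_positive)
          then show "indicator {0..<inverse L} x * h x = 0" by (auto simp: indicator_def)
        qed
      next
        case False
        then show ?thesis using x by (auto simp: indicator_def)
      qed
      then show "((\<lambda>L. indicator {0..<inverse L} x * h x) \<longlongrightarrow> 0) at_top"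
        by (rule tendsto_eventually)
    qed
    show "\<forall>\<^sub>F L in at_top. AE x in lebesgue. norm (indicator {0..<inverse L} x * h x) \<le> \<bar>h x\<bar>"
      by (auto simp: indicator_def)
  qed simp
  then have "((\<lambda>L. integral\<^sup>L lebesgue (\<lambda>x. indicator {0..<inverse L} x * h x)) \<longlongrightarrow> 0) at_top" by simp
  from tendstoD[OF this e] obtain L0 where
    L0: "\<And>L. L \<ge> L0 \<Longrightarrow> \<bar>integral\<^sup>L lebesgue (\<lambda>x. indicator {0..<inverse L} x * h x)\<bar> < e"
    by (auto simp: eventually_at_top_linorder dist_real_def)
  show ?thesis
    using L0[of "max L0 1"] by (intro exI[of _ "inverse (max L0 1)"]) auto
qed

lemma integral_rescale:
  fixes h :: "real \<Rightarrow> real"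
  assumes l: "l > 0" and h: "integrable lebesgue h"
  shows "integrable lebesgue (\<lambda>t. l * h (l * t))"
        "integral\<^sup>L lebesgue (\<lambda>t. l * h (l * t)) = integral\<^sup>L lebesgue h"
proof -
  have "integrable lebesgue (\<lambda>t. h (0 + l * t))"
    using lebesgue_integrable_real_affine_iff[of l h 0] l h by simp
  then show "integrable lebesgue (\<lambda>t. l * h (l * t))" by simp
  have "integral\<^sup>L lebesgue h = \<bar>l\<bar> *\<^sub>R integral\<^sup>L lebesgue (\<lambda>t. h (0 + l * t))"
    using lebesgue_integral_real_affine[of l h 0] l by simp
  then show "integral\<^sup>L lebesgue (\<lambda>t. l * h (l * t)) = integral\<^sup>L lebesgue h"
    using l by simp
qed

definition delay :: "(real \<Rightarrow> real) \<Rightarrow> real \<Rightarrow> real \<Rightarrow> real" where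
  "delay \<rho> c t = (if c \<le> t then \<rho> (t - c) else 0)"

lemma weight_delay_shift: "c \<ge> 0 \<Longrightarrow> weight (delay \<rho> c) (c + 1 * x) = weight \<rho> x"
  by (auto simp: weight_def delay_def indicator_def)

lemma delay_in_densities:
  assumes "\<rho> \<in> densities" "c \<ge> 0"
  shows "delay \<rho> c \<in> densities"
proof -
  have i: "integrable lebesgue (weight \<rho>)" "integral\<^sup>L lebesgue (weight \<rho>) = 1"
    using assms by (auto simp: densities_iff_weight)
  have e: "(\<lambda>x. weight (delay \<rho> c) (c + 1 * x)) = weight \<rho>"
    using assms(2) weight_delay_shift[of c \<rho>] by (auto simp: fun_eq_iff)
  have "integrable lebesgue (weight (delay \<rho> c))"
    using lebesgue_integrable_real_affine_iff[of 1 "weight (delay \<rho> c)" c] e i by simp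
  moreover have "integral\<^sup>L lebesgue (weight (delay \<rho> c)) = 1"
    using lebesgue_integral_real_affine[of 1 "weight (delay \<rho> c)" c] e i by simp
  moreover have "\<forall>t\<ge>0. 0 \<le> delay \<rho> c t"
    using assms by (auto simp: delay_def densities_iff_weight)
  ultimately show ?thesis by (simp add: densities_iff_weight)
qed

lemma weight_varpi: "T > 0 \<Longrightarrow> weight (varpi T) = (\<lambda>t. (1/T) * indicator {0..T} t)"
  by (auto simp: weight_def varpi_def indicator_def fun_eq_iff)

lemma varpi_in_densities: "T > 0 \<Longrightarrow> varpi T \<in> densities"
proof -
  assume T: "T > 0"
  show ?thesis
    unfolding densities_iff_weight weight_varpi[OF T] using integral_indicator_atLeastAtMost[of 0 T] T
    by (auto simp: varpi_def)
qed

lemma weight_delay_varpi: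
  "L > 0 \<Longrightarrow> a \<ge> 0 \<Longrightarrow> weight (delay (varpi L) a) = (\<lambda>t. (1/L) * indicator {a..a+L} t)"
  by (auto simp: weight_def delay_def varpi_def indicator_def fun_eq_iff)

lemma weight_rho_scale: "l > 0 \<Longrightarrow> weight (rho_scale \<mu> l) t = l * weight \<mu> (l * t)"
  by (auto simp: weight_def rho_scale_def indicator_def zero_le_mult_iff)

lemma rho_scale_in_densities: "\<mu> \<in> densities \<Longrightarrow> l > 0 \<Longrightarrow> rho_scale \<mu> l \<in> densities"
proof -
  assume m: "\<mu> \<in> densities" and l: "l > 0"
  have e: "weight (rho_scale \<mu> l) = (\<lambda>t. l * weight \<mu> (l * t))" using weight_rho_scale[OF l] by auto
  show ?thesis unfolding densities_iff_weight e
    using integral_rescale[OF l, of "weight \<mu>"] m l by (auto simp: rho_scale_def densities_iff_weight)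
qed

lemma integral_tail_rho_scale:
  assumes mu: "\<mu> \<in> densities" and l: "l > 0"
  shows "integral\<^sup>L lebesgue (\<lambda>t. indicator {c / l..} t * weight (rho_scale \<mu> l) t)
    = integral\<^sup>L lebesgue (\<lambda>t. indicator {c..} t * weight \<mu> t)"
proof -
  have "(\<lambda>t. indicator {c / l..} t * weight (rho_scale \<mu> l) t)
      = (\<lambda>t. l * (indicator {c..} (l * t) * weight \<mu> (l * t)))"
    using l by (auto simp: fun_eq_iff indicator_def weight_rho_scale divide_le_eq mult.commute)
  moreover have "integrable lebesgue (\<lambda>t. indicator {c..} t * weight \<mu> t)"
    using integrable_mult_indicator[OF _ integrable_weight[OF mu]] by simp
  ultimately show ?thesis using integral_rescale(2)[OF l] by simp
qed

section \<open>Nonincreasing densities and Riemann sums\<close>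

definition antitone_nonneg :: "(real \<Rightarrow> real) \<Rightarrow> bool" where
  "antitone_nonneg \<rho> \<longleftrightarrow> (\<forall>s t. 0 \<le> s \<longrightarrow> s \<le> t \<longrightarrow> \<rho> t \<le> \<rho> s)"

lemma antitone_nonneg_rho_scale: "antitone_nonneg \<mu> \<Longrightarrow> l > 0 \<Longrightarrow> antitone_nonneg (rho_scale \<mu> l)"
  unfolding antitone_nonneg_def rho_scale_def by (auto intro!: mult_left_mono)

lemma integral_initial_segment_le:
  assumes r: "\<rho> \<in> densities" "antitone_nonneg \<rho>" and c: "c \<ge> 0"
  shows "integral\<^sup>L lebesgue (\<lambda>t. indicator {..<c} t * weight \<rho> t) \<le> c * \<rho> 0"
proof -
  have "integral\<^sup>L lebesgue (\<lambda>t. indicator {..<c} t * weight \<rho> t) \<le> integral\<^sup>L lebesgue (\<lambda>t. \<rho> 0 * indicator {0..c} t)"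
  proof (rule integral_mono)
    show "integrable lebesgue (\<lambda>t. indicator {..<c} t * weight \<rho> t)"
      using integrable_mult_indicator[of "{..<c}" lebesgue "weight \<rho>"] r(1) by (simp add: densities_iff_weight)
    show "integrable lebesgue (\<lambda>t. \<rho> 0 * indicator {0..c} t)" using integral_indicator_atLeastAtMost[OF c] by simp
    fix t show "indicator {..<c} t * weight \<rho> t \<le> \<rho> 0 * indicator {0..c} t"
      using r by (auto simp: indicator_def weight_def antitone_nonneg_def densities_iff_weight)
  qed
  also have "\<dots> = c * \<rho> 0" using integral_indicator_atLeastAtMost[OF c] by simp
  finally show ?thesis .
qed

lemma integral_window_le_antitone:
  assumes r: "\<rho> \<in> densities" "antitone_nonneg \<rho>" and y: "y \<ge> 0" and d: "d \<ge> 0"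
  shows "integral\<^sup>L lebesgue (\<lambda>x. indicator {y..y+d} x * weight \<rho> x) \<le> d * \<rho> y"
proof -
  have "integral\<^sup>L lebesgue (\<lambda>x. indicator {y..y+d} x * weight \<rho> x) \<le> integral\<^sup>L lebesgue (\<lambda>x. \<rho> y * indicator {y..y+d} x)"
  proof (rule integral_mono)
    show "integrable lebesgue (\<lambda>x. indicator {y..y+d} x * weight \<rho> x)"
      using integrable_mult_indicator[of "{y..y+d}" lebesgue "weight \<rho>"] r(1) by (simp add: densities_iff_weight)
    show "integrable lebesgue (\<lambda>x. \<rho> y * indicator {y..y+d} x)" using integral_indicator_atLeastAtMost[of y "y+d"] d by simp
    fix x show "indicator {y..y+d} x * weight \<rho> x \<le> \<rho> y * indicator {y..y+d} x"
      using r y by (auto simp: indicator_def weight_def antitone_nonneg_def)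
  qed
  also have "\<dots> = d * \<rho> y" using integral_indicator_atLeastAtMost[of y "y+d"] d by simp
  finally show ?thesis .
qed

lemma grid_cover:
  fixes d a t x :: real
  assumes d: "d > 0" and x: "d \<le> x" "x \<le> t - a" and tN: "t - a < real N * d"
  shows "\<exists>j<N. a + real j * d \<le> t \<and> t - (a + real j * d) \<le> x \<and> x \<le> t - (a + real j * d) + d"
proof -
  define y where "y = (t - x - a) / d"
  have y0: "y \<ge> 0" using x d by (simp add: y_def)
  define j where "j = nat \<lceil>y\<rceil>"
  have c0: "0 \<le> \<lceil>y\<rceil>" using y0 by simp
  have rj: "real j = of_int \<lceil>y\<rceil>" using c0 by (simp add: j_def)
  have jy: "real j \<ge> y" "real j < y + 1" unfolding rj using ceiling_correct[of y] by linarith+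
  have jd1: "real j * d \<ge> t - x - a" using jy(1) d by (simp add: y_def field_simps)
  have jd2: "real j * d < t - x - a + d" using jy(2) d by (simp add: y_def field_simps)
  have "y < real N - 1"
  proof -
    have "t - x - a < real N * d - d" using tN x by linarith
    then show ?thesis using d by (simp add: y_def field_simps)
  qed
  then have "real j < real N" using jy by linarith
  then have "j < N" by simp
  moreover have "a + real j * d \<le> t" using jd2 x by linarith
  moreover have "t - (a + real j * d) \<le> x" using jd1 by linarith
  moreover have "x \<le> t - (a + real j * d) + d" using jd2 by linarith
  ultimately show ?thesis by blast
qed

lemma integral_le_delay_sum:
  assumes r: "\<rho> \<in> densities" "antitone_nonneg \<rho>" and d: "d > 0" and a: "a \<ge> 0"
    and t: "a + d \<le> t" "t - a < real N * d"
  shows "integral\<^sup>L lebesgue (\<lambda>x. indicator {d..t-a} x * weight \<rho> x)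
     \<le> d * (\<Sum>j<N. weight (delay \<rho> (a + real j * d)) t)"
proof -
  have wi: "integrable lebesgue (weight \<rho>)" using r(1) by (simp add: densities_iff_weight)
  have wnn: "0 \<le> weight \<rho> x" for x using weight_nonneg[OF r(1)] .
  define G where "G j x = (if a + real j * d \<le> t then indicator {t - (a + real j * d)..t - (a + real j * d) + d} x else 0) * weight \<rho> x" for j x
  have Gi: "integrable lebesgue (G j)" for j
  proof (cases "a + real j * d \<le> t")
    case True
    then have "G j = (\<lambda>x. indicator {t - (a + real j * d)..t - (a + real j * d) + d} x *\<^sub>R weight \<rho> x)"
      by (simp add: G_def fun_eq_iff)
    then show ?thesis using integrable_mult_indicator[OF _ wi, of "{t - (a + real j * d)..t - (a + real j * d) + d}"]
      by simp
  next
    case False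
    then have "G j = (\<lambda>x. 0)" by (simp add: G_def fun_eq_iff)
    then show ?thesis by simp
  qed
  have trm: "integral\<^sup>L lebesgue (G j) \<le> d * weight (delay \<rho> (a + real j * d)) t" for j
  proof (cases "a + real j * d \<le> t")
    case True
    then have "G j = (\<lambda>x. indicator {t - (a + real j * d)..t - (a + real j * d) + d} x * weight \<rho> x)"
      by (simp add: G_def fun_eq_iff)
    then have "integral\<^sup>L lebesgue (G j) \<le> d * \<rho> (t - (a + real j * d))"
      using integral_window_le_antitone[OF r, of "t - (a + real j * d)" d] True d by simp
    also have "\<rho> (t - (a + real j * d)) = weight (delay \<rho> (a + real j * d)) t"
    proof -
      have "0 \<le> real j * d" using d by simp
      then have "0 \<le> t" using True a by linarith
      then show ?thesis using True by (simp add: weight_def delay_def)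
    qed
    finally show ?thesis .
  next
    case False
    then have "G j = (\<lambda>x. 0)" by (simp add: G_def fun_eq_iff)
    then show ?thesis using False by (simp add: weight_def delay_def)
  qed
  have "integral\<^sup>L lebesgue (\<lambda>x. indicator {d..t-a} x * weight \<rho> x) \<le> integral\<^sup>L lebesgue (\<lambda>x. \<Sum>j<N. G j x)"
  proof (rule integral_mono)
    show "integrable lebesgue (\<lambda>x. indicator {d..t-a} x * weight \<rho> x)"
      using integrable_mult_indicator[OF _ wi] by simp
    show "integrable lebesgue (\<lambda>x. \<Sum>j<N. G j x)" using Gi by auto
    fix x
    show "indicator {d..t-a} x * weight \<rho> x \<le> (\<Sum>j<N. G j x)"
    proof (cases "x \<in> {d..t-a}")
      case True
      then have "d \<le> x" "x \<le> t - a" by auto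
      from grid_cover[OF d this t(2)]
      obtain j where j: "j < N" "a + real j * d \<le> t" "t - (a + real j * d) \<le> x" "x \<le> t - (a + real j * d) + d"
        by blast
      have "G j x = weight \<rho> x" using j by (simp add: G_def indicator_def)
      moreover have "G j x \<le> (\<Sum>j<N. G j x)"
      proof (rule member_le_sum)
        show "j \<in> {..<N}" using j(1) by simp
        fix i assume "i \<in> {..<N} - {j}"
        show "0 \<le> G i x" unfolding G_def by (rule mult_nonneg_nonneg) (auto simp: wnn)
      qed simp
      ultimately show ?thesis using True by simp
    next
      case False
      have "0 \<le> (\<Sum>j<N. G j x)"
        by (rule sum_nonneg) (unfold G_def, rule mult_nonneg_nonneg, auto simp: wnn)
      then show ?thesis using False by simp
    qed
  qed
  also have "\<dots> = (\<Sum>j<N. integral\<^sup>L lebesgue (G j))"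
    using Gi by (simp add: Bochner_Integration.integral_sum)
  also have "\<dots> \<le> (\<Sum>j<N. d * weight (delay \<rho> (a + real j * d)) t)"
    by (rule sum_mono) (rule trm)
  also have "\<dots> = d * (\<Sum>j<N. weight (delay \<rho> (a + real j * d)) t)" by (simp add: sum_distrib_left)
  finally show ?thesis .
qed

lemma delay_sum_lower:
  assumes r: "\<rho> \<in> densities" "antitone_nonneg \<rho>" and d: "d > 0" and a: "a \<ge> 0"
    and t: "a + d \<le> t" "t - a < real N * d" "R \<le> t - a"
  shows "1 - d * \<rho> 0 - integral\<^sup>L lebesgue (\<lambda>x. indicator {R..} x * weight \<rho> x)
    \<le> d * (\<Sum>j<N. weight (delay \<rho> (a + real j * d)) t)"
proof -
  have wi: "integrable lebesgue (weight \<rho>)" by (rule integrable_weight[OF r(1)])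
  have i1: "integrable lebesgue (\<lambda>x. indicator {d..t-a} x * weight \<rho> x)"
    and i2: "integrable lebesgue (\<lambda>x. indicator {..<d} x * weight \<rho> x)"
    and i3: "integrable lebesgue (\<lambda>x. indicator {t-a<..} x * weight \<rho> x)"
    and i4: "integrable lebesgue (\<lambda>x. indicator {R..} x * weight \<rho> x)"
    using integrable_mult_indicator[OF _ wi] by simp_all
  have split: "weight \<rho> = (\<lambda>x. indicator {d..t-a} x * weight \<rho> x + indicator {..<d} x * weight \<rho> x
      + indicator {t-a<..} x * weight \<rho> x)"
    using t by (auto simp: indicator_def fun_eq_iff)
  have "1 = integral\<^sup>L lebesgue (weight \<rho>)" using r(1) by (simp add: densities_iff_weight)
  also have "\<dots> = integral\<^sup>L lebesgue (\<lambda>x. indicator {d..t-a} x * weight \<rho> x)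
      + integral\<^sup>L lebesgue (\<lambda>x. indicator {..<d} x * weight \<rho> x)
      + integral\<^sup>L lebesgue (\<lambda>x. indicator {t-a<..} x * weight \<rho> x)"
    by (subst split) (simp add: i1 i2 i3)
  finally have "1 = integral\<^sup>L lebesgue (\<lambda>x. indicator {d..t-a} x * weight \<rho> x)
      + integral\<^sup>L lebesgue (\<lambda>x. indicator {..<d} x * weight \<rho> x)
      + integral\<^sup>L lebesgue (\<lambda>x. indicator {t-a<..} x * weight \<rho> x)" .
  moreover have "integral\<^sup>L lebesgue (\<lambda>x. indicator {..<d} x * weight \<rho> x) \<le> d * \<rho> 0"
    using d by (intro integral_initial_segment_le[OF r]) simp
  moreover have "integral\<^sup>L lebesgue (\<lambda>x. indicator {t-a<..} x * weight \<rho> x)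
      \<le> integral\<^sup>L lebesgue (\<lambda>x. indicator {R..} x * weight \<rho> x)"
  proof (rule integral_mono)
    show "integrable lebesgue (\<lambda>x. indicator {t-a<..} x * weight \<rho> x)"
      and "integrable lebesgue (\<lambda>x. indicator {R..} x * weight \<rho> x)"
      by (simp_all add: i3 i4)
    show "indicator {t-a<..} x * weight \<rho> x \<le> indicator {R..} x * weight \<rho> x" for x
      using t(3) weight_nonneg[OF r(1), of x] by (auto simp: indicator_def)
  qed
  moreover have "integral\<^sup>L lebesgue (\<lambda>x. indicator {d..t-a} x * weight \<rho> x)
      \<le> d * (\<Sum>j<N. weight (delay \<rho> (a + real j * d)) t)"
    by (rule integral_le_delay_sum[OF r d a t(1,2)])
  ultimately show ?thesis by linarith
qed

lemma weight_le_grid_majorant: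
  assumes r: "\<rho> \<in> densities" "antitone_nonneg \<rho>" and D: "\<Delta> > 0"
  shows "weight \<rho> t \<le> (\<Sum>i<m. \<rho> (real i * \<Delta>) * indicator {real i * \<Delta>..<real (Suc i) * \<Delta>} t)
            + indicator {real m * \<Delta>..} t * weight \<rho> t"
proof -
  have rnn: "0 \<le> \<rho> x" if "x \<ge> 0" for x using r(1) that by (simp add: densities_iff_weight)
  have snn: "0 \<le> (\<Sum>i<m. \<rho> (real i * \<Delta>) * indicator {real i * \<Delta>..<real (Suc i) * \<Delta>} t)"
    using D by (intro sum_nonneg mult_nonneg_nonneg rnn) auto
  have wnn: "0 \<le> weight \<rho> t" by (rule weight_nonneg[OF r(1)])
  show ?thesis
  proof (cases "t < 0")
    case True
    then show ?thesis using snn by (simp add: weight_def)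
  next
    case False
    show ?thesis
    proof (cases "t \<ge> real m * \<Delta>")
      case True
      then show ?thesis using snn by simp
    next
      case False2: False
      have "(\<Sum>i<m. indicator {real i * \<Delta>..<real (Suc i) * \<Delta>} t) = (1::real)"
        using sum_indicator_grid[OF D, where m=m and t=t] False False2 by simp
      then obtain i where i: "i < m" "t \<in> {real i * \<Delta>..<real (Suc i) * \<Delta>}"
        by (metis (no_types, lifting) indicator_simps(2) lessThan_iff sum.neutral zero_neq_one)
      have "weight \<rho> t = \<rho> t" using False by (simp add: weight_def)
      also have "\<dots> \<le> \<rho> (real i * \<Delta>)" using r(2) i D by (auto simp: antitone_nonneg_def)
      also have "\<dots> = \<rho> (real i * \<Delta>) * indicator {real i * \<Delta>..<real (Suc i) * \<Delta>} t" using i by simp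
      also have "\<dots> \<le> (\<Sum>i<m. \<rho> (real i * \<Delta>) * indicator {real i * \<Delta>..<real (Suc i) * \<Delta>} t)"
      proof (rule member_le_sum)
        show "i \<in> {..<m}" using i by simp
        fix j assume "j \<in> {..<m} - {i}"
        show "0 \<le> \<rho> (real j * \<Delta>) * indicator {real j * \<Delta>..<real (Suc j) * \<Delta>} t"
          using D by (intro mult_nonneg_nonneg rnn) auto
      qed simp
      finally show ?thesis using wnn False2 by simp
    qed
  qed
qed

lemma riemann_sum_le:
  assumes r: "\<rho> \<in> densities" "antitone_nonneg \<rho>" and D: "\<Delta> > 0"
  shows "\<Delta> * (\<Sum>i<Suc k. \<rho> (real i * \<Delta>)) \<le> \<Delta> * \<rho> 0 + 1"
proof -
  have wi: "integrable lebesgue (weight \<rho>)" using r(1) by (simp add: densities_iff_weight)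
  have wnn: "0 \<le> weight \<rho> x" for x by (rule weight_nonneg[OF r(1)])
  have Ii: "integrable lebesgue (\<lambda>x. indicator {real i * \<Delta>..<real (Suc i) * \<Delta>} x * weight \<rho> x)" for i
    using integrable_mult_indicator[OF _ wi] by simp
  have trm: "\<Delta> * \<rho> (real (Suc i) * \<Delta>) \<le> integral\<^sup>L lebesgue (\<lambda>x. indicator {real i * \<Delta>..<real (Suc i) * \<Delta>} x * weight \<rho> x)" for i
  proof -
    have "\<Delta> * \<rho> (real (Suc i) * \<Delta>) = integral\<^sup>L lebesgue (\<lambda>x. \<rho> (real (Suc i) * \<Delta>) * indicator {real i * \<Delta>..<real (Suc i) * \<Delta>} x)"
      using integral_indicator_atLeastLessThan[of "real i * \<Delta>" "real (Suc i) * \<Delta>"] D by (simp add: algebra_simps)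
    also have "\<dots> \<le> integral\<^sup>L lebesgue (\<lambda>x. indicator {real i * \<Delta>..<real (Suc i) * \<Delta>} x * weight \<rho> x)"
    proof (rule integral_mono[OF _ Ii])
      show "integrable lebesgue (\<lambda>x. \<rho> (real (Suc i) * \<Delta>) * indicator {real i * \<Delta>..<real (Suc i) * \<Delta>} x)"
        using integral_indicator_atLeastLessThan[of "real i * \<Delta>" "real (Suc i) * \<Delta>"] D by simp
      fix x
      show "\<rho> (real (Suc i) * \<Delta>) * indicator {real i * \<Delta>..<real (Suc i) * \<Delta>} x \<le> indicator {real i * \<Delta>..<real (Suc i) * \<Delta>} x * weight \<rho> x"
      proof (cases "x \<in> {real i * \<Delta>..<real (Suc i) * \<Delta>}")
        case True
        then have x0: "0 \<le> x" using D by (meson atLeastLessThan_iff mult_nonneg_nonneg of_nat_0_le_iff order.trans less_imp_le)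
        then have "weight \<rho> x = \<rho> x" by (simp add: weight_def)
        moreover have "\<rho> (real (Suc i) * \<Delta>) \<le> \<rho> x" using r(2) True x0 by (auto simp: antitone_nonneg_def)
        ultimately show ?thesis using True by simp
      qed simp
    qed
    finally show ?thesis .
  qed
  have "\<Delta> * (\<Sum>i<Suc k. \<rho> (real i * \<Delta>)) = \<Delta> * \<rho> 0 + (\<Sum>i<k. \<Delta> * \<rho> (real (Suc i) * \<Delta>))"
    by (subst sum.lessThan_Suc_shift) (simp add: sum_distrib_left distrib_left)
  also have "(\<Sum>i<k. \<Delta> * \<rho> (real (Suc i) * \<Delta>))
      \<le> (\<Sum>i<k. integral\<^sup>L lebesgue (\<lambda>x. indicator {real i * \<Delta>..<real (Suc i) * \<Delta>} x * weight \<rho> x))"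
    by (rule sum_mono) (rule trm)
  also have "\<dots> = integral\<^sup>L lebesgue (\<lambda>x. \<Sum>i<k. indicator {real i * \<Delta>..<real (Suc i) * \<Delta>} x * weight \<rho> x)"
    using Ii by (intro Bochner_Integration.integral_sum[symmetric])
  also have "\<dots> = integral\<^sup>L lebesgue (\<lambda>x. indicator {0..<real k * \<Delta>} x * weight \<rho> x)"
  proof -
    have "(\<lambda>x. \<Sum>i<k. indicator {real i * \<Delta>..<real (Suc i) * \<Delta>} x * weight \<rho> x)
      = (\<lambda>x. (\<Sum>i<k. indicator {real i * \<Delta>..<real (Suc i) * \<Delta>} x) * weight \<rho> x)"
      by (simp only: sum_distrib_right)
    also have "\<dots> = (\<lambda>x. indicator {0..<real k * \<Delta>} x * weight \<rho> x)"
      by (simp only: sum_indicator_grid[OF D])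
    finally show ?thesis by simp
  qed
  also have "\<dots> \<le> integral\<^sup>L lebesgue (weight \<rho>)"
  proof (rule integral_mono[OF _ wi])
    show "integrable lebesgue (\<lambda>x. indicator {0..<real k * \<Delta>} x * weight \<rho> x)"
      using integrable_mult_indicator[OF _ wi] by simp
    fix x show "indicator {0..<real k * \<Delta>} x * weight \<rho> x \<le> weight \<rho> x"
      using wnn[of x] by (auto simp: indicator_def)
  qed
  also have "\<dots> = 1" using r(1) by (simp add: densities_iff_weight)
  finally show ?thesis by simp
qed

lemma sum_mult_le_deficit:
  fixes r d :: "nat \<Rightarrow> real"
  assumes nm: "n \<le> m" and r: "\<And>i. i < m \<Longrightarrow> 0 \<le> r i" and d: "\<And>i. i < m \<Longrightarrow> d i \<le> D"
    and r0: "\<And>i. i < n \<Longrightarrow> r0 \<le> r i"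
  shows "(\<Sum>i<m. r i * d i) \<le> D * (\<Sum>i<m. r i) - r0 * (real n * D - (\<Sum>i<n. d i))"
proof -
  have "r0 * (real n * D - (\<Sum>i<n. d i)) = (\<Sum>i<n. r0 * (D - d i))"
    by (simp add: sum_subtractf sum_distrib_left right_diff_distrib)
  also have "\<dots> \<le> (\<Sum>i<n. r i * (D - d i))"
    using nm d r0 by (intro sum_mono mult_right_mono) auto
  also have "\<dots> \<le> (\<Sum>i<m. r i * (D - d i))"
    using nm r d by (intro sum_mono2) auto
  also have "\<dots> = D * (\<Sum>i<m. r i) - (\<Sum>i<m. r i * d i)"
    by (simp add: sum_subtractf sum_distrib_left algebra_simps)
  finally show ?thesis by linarith
qed

section \<open>Approximation by step functions\<close>

definition step_fun :: "nat \<Rightarrow> (nat \<Rightarrow> real) \<Rightarrow> (nat \<Rightarrow> real) \<Rightarrow> (nat \<Rightarrow> real) \<Rightarrow> real \<Rightarrow> real" where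
  "step_fun n a b c t = (\<Sum>i<n. c i * indicator {a i..b i} t)"

definition step_data :: "nat \<Rightarrow> (nat \<Rightarrow> real) \<Rightarrow> (nat \<Rightarrow> real) \<Rightarrow> (nat \<Rightarrow> real) \<Rightarrow> real \<Rightarrow> real \<Rightarrow> bool" where
  "step_data n a b c lo hi \<longleftrightarrow> (\<forall>i<n. lo \<le> a i \<and> a i \<le> b i \<and> b i \<le> hi \<and> 0 \<le> c i)"

lemma step_fun_above: "step_data n a b c lo hi \<Longrightarrow> hi < t \<Longrightarrow> step_fun n a b c t = 0"
  unfolding step_fun_def step_data_def by (intro sum.neutral) (auto simp: indicator_def)

lemma step_fun_below: "step_data n a b c lo hi \<Longrightarrow> t < lo \<Longrightarrow> step_fun n a b c t = 0"
  unfolding step_fun_def step_data_def by (intro sum.neutral) (auto simp: indicator_def)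

lemma step_fun_Suc: "step_fun (Suc n) (a(n:=y)) (b(n:=m)) (c(n:=cc)) t = step_fun n a b c t + cc * indicator {y..m} t"
proof -
  have "(\<Sum>i<n. (c(n:=cc)) i * indicator {(a(n:=y)) i..(b(n:=m)) i} t) = (\<Sum>i<n. c i * indicator {a i..b i} t)"
    by (intro sum.cong) auto
  then show ?thesis unfolding step_fun_def sum.lessThan_Suc by simp
qed

definition step_approx :: "(real \<Rightarrow> real) \<Rightarrow> real \<Rightarrow> real \<Rightarrow> real \<Rightarrow> bool" where
  "step_approx \<mu> \<eta> lo hi \<longleftrightarrow> (\<exists>n a b c E. finite E \<and> step_data n a b c lo hi \<and>
     (\<forall>t\<in>{lo..hi} - E. \<bar>\<mu> t - step_fun n a b c t\<bar> \<le> \<eta>))"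

lemma step_approx_refl: "step_approx \<mu> \<eta> lo lo"
  unfolding step_approx_def
  by (rule exI[of _ 0], rule exI, rule exI, rule exI, rule exI[of _ "{lo}"]) (auto simp: step_data_def)

lemma step_approx_extend:
  fixes \<mu> :: "real \<Rightarrow> real"
  assumes old: "step_approx \<mu> \<eta> lo y" and y: "lo \<le> y" "y \<le> m"
    and new: "\<And>t. y < t \<Longrightarrow> t < m \<Longrightarrow> 0 \<le> \<mu> t \<and> \<bar>\<mu> t - l\<bar> \<le> \<eta>"
  shows "step_approx \<mu> \<eta> lo m"
proof -
  obtain n a b c E where fin: "finite E" and ok: "step_data n a b c lo y"
    and ap: "\<forall>t\<in>{lo..y} - E. \<bar>\<mu> t - step_fun n a b c t\<bar> \<le> \<eta>"
    using old unfolding step_approx_def by blast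
  define cc where "cc = max l 0"
  have ok': "step_data (Suc n) (a(n:=y)) (b(n:=m)) (c(n:=cc)) lo m"
    using ok y unfolding step_data_def cc_def by (auto simp: less_Suc_eq)
  have "\<bar>\<mu> t - step_fun (Suc n) (a(n:=y)) (b(n:=m)) (c(n:=cc)) t\<bar> \<le> \<eta>"
    if t: "t \<in> {lo..m} - (E \<union> {y, m})" for t
  proof (cases "t < y")
    case True
    then show ?thesis using ap t unfolding step_fun_Suc by (auto simp: indicator_def)
  next
    case False
    then have yt: "y < t" "t < m" using t by auto
    have "\<bar>\<mu> t - cc\<bar> \<le> \<bar>\<mu> t - l\<bar>" using new[OF yt] unfolding cc_def by (auto simp: max_def)
    then have "\<bar>\<mu> t - cc\<bar> \<le> \<eta>" using new[OF yt] by linarith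
    then show ?thesis using yt step_fun_above[OF ok yt(1)] unfolding step_fun_Suc
      by (simp add: indicator_def)
  qed
  then show ?thesis unfolding step_approx_def using fin ok'
    by (intro exI[of _ "Suc n"] exI[of _ "a(n:=y)"] exI[of _ "b(n:=m)"] exI[of _ "c(n:=cc)"]
        exI[of _ "E \<union> {y, m}"]) auto
qed

lemma step_approx_left_limit:
  fixes \<mu> :: "real \<Rightarrow> real"
  assumes lm: "lo < m" and below: "\<And>y. lo \<le> y \<Longrightarrow> y < m \<Longrightarrow> step_approx \<mu> \<eta> lo y"
    and nonneg: "\<And>t. lo \<le> t \<Longrightarrow> t < m \<Longrightarrow> 0 \<le> \<mu> t"
    and l: "(\<mu> \<longlongrightarrow> l) (at_left m)" and \<eta>: "\<eta> > 0"
  shows "step_approx \<mu> \<eta> lo m"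
proof -
  from tendstoD[OF l \<eta>] obtain b where b: "b < m" "\<And>t. b < t \<Longrightarrow> t < m \<Longrightarrow> dist (\<mu> t) l < \<eta>"
    unfolding eventually_at_left_field by blast
  define y where "y = max lo ((b + m) / 2)"
  have "b < (b + m) / 2" "(b + m) / 2 < m" using b by simp_all
  then have y: "lo \<le> y" "y < m" "b < y" using lm unfolding y_def by linarith+
  have "0 \<le> \<mu> t \<and> \<bar>\<mu> t - l\<bar> \<le> \<eta>" if "y < t" "t < m" for t
    using b(2)[of t] y that nonneg[of t] by (simp add: dist_real_def)
  then show ?thesis using y by (intro step_approx_extend[OF below[OF y(1,2)] y(1), of m l]) auto
qed

lemma step_approx_right_limit:
  fixes \<mu> :: "real \<Rightarrow> real"
  assumes P: "step_approx \<mu> \<eta> lo m" and lm: "lo \<le> m" and l: "(\<mu> \<longlongrightarrow> l) (at_right m)" and \<eta>: "\<eta> > 0"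
  obtains b where "m < b" "\<And>y. m < y \<Longrightarrow> y < b \<Longrightarrow> (\<And>t. m < t \<Longrightarrow> t < y \<Longrightarrow> 0 \<le> \<mu> t) \<Longrightarrow>
      step_approx \<mu> \<eta> lo y"
proof -
  from tendstoD[OF l \<eta>] obtain b where b: "m < b" "\<And>t. m < t \<Longrightarrow> t < b \<Longrightarrow> dist (\<mu> t) l < \<eta>"
    unfolding eventually_at_right_field by blast
  have "step_approx \<mu> \<eta> lo y"
    if "m < y" "y < b" "\<And>t. m < t \<Longrightarrow> t < y \<Longrightarrow> 0 \<le> \<mu> t" for y
  proof (rule step_approx_extend[OF P lm, of y l])
    show "m \<le> y" using that by simp
    show "0 \<le> \<mu> t \<and> \<bar>\<mu> t - l\<bar> \<le> \<eta>" if "m < t" "t < y" for t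
      using that \<open>y < b\<close> b(2)[of t] \<open>\<And>t. m < t \<Longrightarrow> t < y \<Longrightarrow> 0 \<le> \<mu> t\<close>[of t]
      by (simp add: dist_real_def)
  qed
  with b(1) show ?thesis using that by blast
qed

lemma step_fun_approx:
  fixes \<mu> :: "real \<Rightarrow> real"
  assumes d: "\<delta> \<le> Lb" and \<eta>: "\<eta> > 0"
   and nonneg: "\<And>t. t \<in> {\<delta>..Lb} \<Longrightarrow> 0 \<le> \<mu> t"
   and liml: "\<And>t. t \<in> {\<delta>..Lb} \<Longrightarrow> \<exists>l. (\<mu> \<longlongrightarrow> l) (at_left t)"
   and limr: "\<And>t. t \<in> {\<delta>..Lb} \<Longrightarrow> \<exists>l. (\<mu> \<longlongrightarrow> l) (at_right t)"
  shows "step_approx \<mu> \<eta> \<delta> Lb"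
proof -
  define S where "S = {x. \<delta> \<le> x \<and> x \<le> Lb \<and> (\<forall>y. \<delta> \<le> y \<and> y \<le> x \<longrightarrow> step_approx \<mu> \<eta> \<delta> y)}"
  have dS: "\<delta> \<in> S" using d by (auto simp: S_def step_approx_refl)
  have bS: "bdd_above S" by (auto simp: S_def intro!: bdd_aboveI[of _ Lb])
  define m where "m = Sup S"
  have dm: "\<delta> \<le> m" unfolding m_def using dS bS by (rule cSup_upper)
  have mL: "m \<le> Lb" unfolding m_def using dS by (intro cSup_least) (auto simp: S_def)
  have below: "step_approx \<mu> \<eta> \<delta> y" if "\<delta> \<le> y" "y < m" for y
  proof -
    obtain x where "x \<in> S" "y < x" using \<open>y < m\<close> less_cSupD[of S y] dS unfolding m_def by blast
    then show ?thesis using that by (auto simp: S_def)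
  qed
  have Pm: "step_approx \<mu> \<eta> \<delta> m"
  proof (cases "m = \<delta>")
    case True then show ?thesis by (simp add: step_approx_refl)
  next
    case False
    obtain l where "(\<mu> \<longlongrightarrow> l) (at_left m)" using liml[of m] dm mL by auto
    with False dm mL show ?thesis
      by (intro step_approx_left_limit[OF _ below _ _ \<eta>]) (auto intro: nonneg)
  qed
  have mS: "m \<in> S" unfolding S_def using dm mL below Pm by (auto simp: le_less)
  have "m = Lb"
  proof (rule ccontr)
    assume "m \<noteq> Lb"
    then have mL': "m < Lb" using mL by simp
    obtain l where "(\<mu> \<longlongrightarrow> l) (at_right m)" using limr[of m] dm mL by auto
    then obtain b where b: "m < b" "\<And>y. m < y \<Longrightarrow> y < b \<Longrightarrow> (\<And>t. m < t \<Longrightarrow> t < y \<Longrightarrow> 0 \<le> \<mu> t) \<Longrightarrow>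
        step_approx \<mu> \<eta> \<delta> y"
      using step_approx_right_limit[OF Pm dm _ \<eta>] by blast
    define x where "x = min ((m + b) / 2) Lb"
    have x: "m < x" "x \<le> Lb" "x < b" using b mL' unfolding x_def by (auto simp: min_def)
    have "step_approx \<mu> \<eta> \<delta> y" if "\<delta> \<le> y" "y \<le> x" for y
    proof (cases "y \<le> m")
      case True then show ?thesis using mS that by (auto simp: S_def)
    next
      case False
      then show ?thesis using x that dm by (intro b(2)) (auto intro: nonneg)
    qed
    then have "x \<in> S" using x dm by (auto simp: S_def)
    then have "x \<le> m" unfolding m_def using bS by (rule cSup_upper)
    then show False using x by simp
  qed
  then show ?thesis using Pm by simp
qed

lemma step_fun_integral:
  assumes "step_data n a b c lo hi"
  shows "integrable lebesgue (step_fun n a b c)"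
        "integral\<^sup>L lebesgue (step_fun n a b c) = (\<Sum>i<n. c i * (b i - a i))"
proof -
  have ab: "\<And>i. i < n \<Longrightarrow> a i \<le> b i" using assms by (auto simp: step_data_def)
  have e: "step_fun n a b c = (\<lambda>t. \<Sum>i<n. c i * indicator {a i..b i} t)"
    by (simp add: step_fun_def fun_eq_iff)
  show "integrable lebesgue (step_fun n a b c)"
    unfolding e by (intro Bochner_Integration.integrable_sum integrable_mult_right) (use integral_indicator_atLeastAtMost ab in auto)
  show "integral\<^sup>L lebesgue (step_fun n a b c) = (\<Sum>i<n. c i * (b i - a i))"
    unfolding e
    by (subst Bochner_Integration.integral_sum) (use integral_indicator_atLeastAtMost ab in \<open>auto intro!: integrable_mult_right sum.cong\<close>)
qed

lemma step_fun_rescale: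
  assumes l: "l > 0"
  shows "(\<lambda>t. l * step_fun n a b c (l * t)) = (\<lambda>t. \<Sum>i<n. (l * c i) * indicator {a i / l..b i / l} t)"
proof
  fix t
  have "indicator {a i..b i} (l * t) = (indicator {a i / l..b i / l} t :: real)" for i
    using l by (auto simp: indicator_def field_simps)
  then show "l * step_fun n a b c (l * t) = (\<Sum>i<n. (l * c i) * indicator {a i / l..b i / l} t)"
    unfolding step_fun_def sum_distrib_left by (intro sum.cong refl) (simp only: mult.assoc)
qed

lemma density_L1_approx_step_fun:
  assumes mu: "\<mu> \<in> densities" and pc: "piecewise_continuous_pos \<mu>" and \<eta>: "\<eta> > 0"
  obtains n a b c Lb where "0 < Lb" "step_data n a b c 0 Lb"
    "integral\<^sup>L lebesgue (\<lambda>t. \<bar>weight \<mu> t - step_fun n a b c t\<bar>) \<le> \<eta>"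
proof -
  define \<epsilon> where "\<epsilon> = \<eta> / 3"
  have \<epsilon>: "\<epsilon> > 0" using \<eta> by (simp add: \<epsilon>_def)
  have wi: "integrable lebesgue (weight \<mu>)" using mu by (simp add: densities_iff_weight)
  have wnn: "0 \<le> weight \<mu> t" for t using weight_nonneg[OF mu] .
  obtain \<delta> where \<delta>: "\<delta> > 0" "\<bar>integral\<^sup>L lebesgue (\<lambda>x. indicator {0..<\<delta>} x * weight \<mu> x)\<bar> < \<epsilon>"
    using head_integral_small[OF wi \<epsilon>] by blast
  obtain L0 where L0: "\<And>L. L \<ge> L0 \<Longrightarrow> \<bar>integral\<^sup>L lebesgue (\<lambda>x. indicator {L..} x * weight \<mu> x)\<bar> < \<epsilon>"
    using tail_integral_small[OF wi \<epsilon>] by blast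
  define Lb where "Lb = max L0 (\<delta> + 1)"
  have Lb: "\<delta> \<le> Lb" "Lb > 0" "\<bar>integral\<^sup>L lebesgue (\<lambda>x. indicator {Lb..} x * weight \<mu> x)\<bar> < \<epsilon>"
    using \<delta>(1) L0[of Lb] by (auto simp: Lb_def)
  define \<epsilon>' where "\<epsilon>' = \<epsilon> / Lb"
  have \<epsilon>': "\<epsilon>' > 0" "\<epsilon>' * Lb = \<epsilon>" using \<epsilon> Lb by (auto simp: \<epsilon>'_def)
  obtain n a b c E where fin: "finite E" and ok: "step_data n a b c \<delta> Lb"
    and ap: "\<forall>t\<in>{\<delta>..Lb}-E. \<bar>\<mu> t - step_fun n a b c t\<bar> \<le> \<epsilon>'"
  proof -
    have "step_approx \<mu> \<epsilon>' \<delta> Lb"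
    proof (rule step_fun_approx[OF Lb(1) \<epsilon>'(1)])
      fix t assume "t \<in> {\<delta>..Lb}"
      then have "t > 0" using \<delta> by auto
      then show "0 \<le> \<mu> t" "\<exists>l. (\<mu> \<longlongrightarrow> l) (at_left t)" "\<exists>l. (\<mu> \<longlongrightarrow> l) (at_right t)"
        using mu pc by (auto simp: densities_iff_weight piecewise_continuous_pos_def)
    qed
    then show ?thesis using that unfolding step_approx_def by blast
  qed
  define s where "s = step_fun n a b c"
  have si: "integrable lebesgue s" using step_fun_integral[OF ok] by (simp add: s_def)
  define B where "B = (\<lambda>t. indicator {0..<\<delta>} t * weight \<mu> t + indicator {Lb..} t * weight \<mu> t
      + \<epsilon>' * indicator {\<delta>..Lb} t)"
  have i1: "integrable lebesgue (\<lambda>t. indicator {0..<\<delta>} t * weight \<mu> t)"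
    and i2: "integrable lebesgue (\<lambda>t. indicator {Lb..} t * weight \<mu> t)"
    using integrable_mult_indicator[OF _ wi] by simp_all
  have i3: "integrable lebesgue (\<lambda>t. \<epsilon>' * indicator {\<delta>..Lb} t)"
    using integral_indicator_atLeastAtMost[OF Lb(1)] by simp
  have "AE t in lebesgue. \<bar>weight \<mu> t - s t\<bar> \<le> B t"
    using AE_lebesgue_not_in_finite[OF fin]
  proof eventually_elim
    fix t assume tE: "t \<notin> E"
    consider "t < \<delta>" | "Lb < t" | "t \<in> {\<delta>..Lb} - E" using tE by force
    then show "\<bar>weight \<mu> t - s t\<bar> \<le> B t"
    proof cases
      case 1
      then show ?thesis using wnn[of t] \<epsilon>' step_fun_below[OF ok 1] mu
        by (auto simp: B_def s_def weight_def indicator_def densities_iff_weight)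
    next
      case 2
      then show ?thesis using wnn[of t] \<epsilon>' \<delta>(1) Lb(1) step_fun_above[OF ok 2]
        by (simp add: B_def s_def weight_def indicator_def)
    next
      case 3
      then have "\<bar>\<mu> t - s t\<bar> \<le> \<epsilon>'" using ap by (simp add: s_def)
      then show ?thesis using 3 wnn[of t] \<delta>(1) Lb(1)
        by (auto simp: B_def weight_def indicator_def)
    qed
  qed
  then have "integral\<^sup>L lebesgue (\<lambda>t. \<bar>weight \<mu> t - s t\<bar>) \<le> integral\<^sup>L lebesgue B"
    using wi si i1 i2 i3 by (intro integral_mono_AE) (auto simp: B_def)
  also have "integral\<^sup>L lebesgue B = integral\<^sup>L lebesgue (\<lambda>t. indicator {0..<\<delta>} t * weight \<mu> t)
      + integral\<^sup>L lebesgue (\<lambda>t. indicator {Lb..} t * weight \<mu> t) + \<epsilon>' * (Lb - \<delta>)"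
    unfolding B_def using i1 i2 i3 integral_indicator_atLeastAtMost[OF Lb(1)] by simp
  also have "\<dots> \<le> \<eta>"
  proof -
    have "0 \<le> \<epsilon>' * \<delta>" using \<epsilon>' \<delta> by simp
    then show ?thesis using \<delta>(2) Lb(3) \<epsilon>'(2) by (simp add: \<epsilon>_def right_diff_distrib abs_less_iff)
  qed
  finally have "integral\<^sup>L lebesgue (\<lambda>t. \<bar>weight \<mu> t - step_fun n a b c t\<bar>) \<le> \<eta>"
    by (simp add: s_def)
  moreover have "step_data n a b c 0 Lb"
    using ok \<delta>(1) by (fastforce simp: step_data_def)
  ultimately show ?thesis using that Lb(2) by blast
qed

lemma continuous_imp_piecewise_continuous_pos:
  assumes "\<And>t. t > 0 \<Longrightarrow> isCont \<mu> t"
  shows "piecewise_continuous_pos \<mu>"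
  unfolding piecewise_continuous_pos_def
proof (rule conjI; intro allI impI)
  fix a b :: real assume a: "0 < a"
  have e: "{t \<in> {a..b}. \<not> isCont \<mu> t} = {}" using assms a by auto
  show "finite {t \<in> {a..b}. \<not> isCont \<mu> t}" by (subst e) simp
next
  fix t :: real assume t: "t > 0"
  have "(\<mu> \<longlongrightarrow> \<mu> t) (at t)" using assms[OF t] by (simp add: isCont_def)
  then have "(\<mu> \<longlongrightarrow> \<mu> t) (at_left t) \<and> (\<mu> \<longlongrightarrow> \<mu> t) (at_right t)" by (simp add: filterlim_at_split)
  then show "(\<exists>l. (\<mu> \<longlongrightarrow> l) (at_left t)) \<and> (\<exists>l. (\<mu> \<longlongrightarrow> l) (at_right t))" by blast
qed

lemma pi_exp_1_eq: "pi_exp 1 = (\<lambda>t. exp (- t))"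
  by (simp add: pi_exp_def fun_eq_iff)

lemma pi_exp_1_in_densities: "pi_exp 1 \<in> densities"
proof -
  have h: "((\<lambda>x. exp (- 1 * x)) has_integral exp (- 1 * 0) / 1) {0::real..}"
    by (rule has_integral_exp_minus_to_infinity) simp
  then have h': "((\<lambda>x::real. exp (- x)) has_integral 1) {0..}" by simp
  have si: "set_integrable lebesgue {0..} (\<lambda>x::real. exp (- x))"
    using h' by (intro nonnegative_absolutely_integrable_1) (auto simp: integrable_on_def)
  have "(LINT x:{0..}|lebesgue. exp (- x)) = integral {0..} (\<lambda>x::real. exp (- x))"
    by (rule set_lebesgue_integral_eq_integral(2)[OF si])
  also have "\<dots> = 1" using h' by (rule integral_unique)
  finally show ?thesis using si unfolding densities_def pi_exp_1_eq by auto
qed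

lemma antitone_nonneg_pi_exp_1: "antitone_nonneg (pi_exp 1)"
  unfolding antitone_nonneg_def pi_exp_1_eq by auto

lemma piecewise_continuous_pos_pi_exp_1: "piecewise_continuous_pos (pi_exp 1)"
  unfolding pi_exp_1_eq by (rule continuous_imp_piecewise_continuous_pos) (intro continuous_intros)

lemma rho_scale_pi_exp_1: "rho_scale (pi_exp 1) l = pi_exp l"
  by (simp add: rho_scale_def pi_exp_def fun_eq_iff)

lemma rho_scale_varpi_1: "l > 0 \<Longrightarrow> rho_scale (varpi 1) l = varpi (1 / l)"
  by (auto simp: rho_scale_def varpi_def fun_eq_iff indicator_def field_simps zero_le_mult_iff)

lemma piecewise_continuous_pos_varpi_1: "piecewise_continuous_pos (varpi 1)"
  unfolding piecewise_continuous_pos_def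
proof (rule conjI; intro allI impI)
  have cont: "isCont (varpi 1) t" if "t > 0" "t \<noteq> 1" for t
  proof -
    have ev: "eventually (\<lambda>x. varpi 1 x = varpi 1 t) (nhds t)"
    proof (cases "t < 1")
      case True
      have "eventually (\<lambda>x. x \<in> {0<..<1}) (nhds t)"
        using True that by (intro eventually_nhds_in_open) auto
      then show ?thesis by eventually_elim (use True that in \<open>auto simp: varpi_def indicator_def\<close>)
    next
      case False
      have "eventually (\<lambda>x. x \<in> {1<..}) (nhds t)"
        using False that by (intro eventually_nhds_in_open) auto
      then show ?thesis by eventually_elim (use False that in \<open>auto simp: varpi_def indicator_def\<close>)
    qed
    show ?thesis using isCont_cong[OF ev] by simp
  qed
  fix a b :: real assume a: "0 < a"
  have "{t \<in> {a..b}. \<not> isCont (varpi 1) t} \<subseteq> {1}"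
  proof
    fix x assume "x \<in> {t \<in> {a..b}. \<not> isCont (varpi 1) t}"
    then have "x > 0" "\<not> isCont (varpi 1) x" using a by auto
    then show "x \<in> {1}" using cont by blast
  qed
  then show "finite {t \<in> {a..b}. \<not> isCont (varpi 1) t}" by (rule finite_subset) simp
next
  fix t :: real assume t: "t > 0"
  have left: "\<exists>l. (varpi 1 \<longlongrightarrow> l) (at_left t)"
  proof (cases "t \<le> 1")
    case True
    have "eventually (\<lambda>x. varpi 1 x = 1) (at_left t)"
      unfolding eventually_at_left_field using t True
      by (intro exI[of _ 0]) (auto simp: varpi_def indicator_def)
    then show ?thesis by (blast intro: tendsto_eventually)
  next
    case False
    have "eventually (\<lambda>x. varpi 1 x = 0) (at_left t)"
      unfolding eventually_at_left_field using t False
      by (intro exI[of _ 1]) (auto simp: varpi_def indicator_def)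
    then show ?thesis by (blast intro: tendsto_eventually)
  qed
  have right: "\<exists>l. (varpi 1 \<longlongrightarrow> l) (at_right t)"
  proof (cases "t < 1")
    case True
    have "eventually (\<lambda>x. varpi 1 x = 1) (at_right t)"
      unfolding eventually_at_right_field using t True
      by (intro exI[of _ 1]) (auto simp: varpi_def indicator_def)
    then show ?thesis by (blast intro: tendsto_eventually)
  next
    case False
    have "eventually (\<lambda>x. varpi 1 x = 0) (at_right t)"
      unfolding eventually_at_right_field using t False
      by (intro exI[of _ "t + 1"]) (auto simp: varpi_def indicator_def)
    then show ?thesis by (blast intro: tendsto_eventually)
  qed
  show "(\<exists>l. (varpi 1 \<longlongrightarrow> l) (at_left t)) \<and> (\<exists>l. (varpi 1 \<longlongrightarrow> l) (at_right t))"
    using left right by blast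
qed

lemma power_density_antitone_nonneg:
  assumes "power_density \<rho>" shows "antitone_nonneg \<rho>"
proof -
  obtain \<alpha> \<beta> \<gamma> where p: "\<alpha> > 0" "\<beta> > 0" "\<gamma> > 0" "\<forall>t\<ge>0. \<rho> t = (\<alpha> + \<beta> * t) powr (- \<gamma>)"
    using assms by (auto simp: power_density_def)
  show ?thesis unfolding antitone_nonneg_def
  proof (intro allI impI)
    fix s t :: real assume st: "0 \<le> s" "s \<le> t"
    have "(\<alpha> + \<beta> * t) powr (- \<gamma>) \<le> (\<alpha> + \<beta> * s) powr (- \<gamma>)"
      using p st by (intro powr_mono2') (auto intro: add_pos_nonneg mult_left_mono)
    then show "\<rho> t \<le> \<rho> s" using p st by simp
  qed
qed

lemma power_density_pos:
  assumes "power_density \<rho>" "t \<ge> 0" shows "\<rho> t > 0"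
proof -
  obtain \<alpha> \<beta> \<gamma> where p: "\<alpha> > 0" "\<beta> > 0" "\<gamma> > 0" "\<forall>t\<ge>0. \<rho> t = (\<alpha> + \<beta> * t) powr (- \<gamma>)"
    using assms by (auto simp: power_density_def)
  have "\<alpha> + \<beta> * t > 0" using p assms(2) by (simp add: add_pos_nonneg)
  then show ?thesis using p assms(2) by simp
qed

lemma power_density_piecewise_continuous_pos:
  assumes "power_density \<rho>" shows "piecewise_continuous_pos \<rho>"
proof (rule continuous_imp_piecewise_continuous_pos)
  obtain \<alpha> \<beta> \<gamma> where p: "\<alpha> > 0" "\<beta> > 0" "\<gamma> > 0" "\<forall>t\<ge>0. \<rho> t = (\<alpha> + \<beta> * t) powr (- \<gamma>)"
    using assms by (auto simp: power_density_def)
  fix t :: real assume t: "t > 0"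
  have ev: "eventually (\<lambda>x. \<rho> x = (\<alpha> + \<beta> * x) powr (- \<gamma>)) (nhds t)"
  proof -
    have "eventually (\<lambda>x. x \<in> {0<..}) (nhds t)" using t by (intro eventually_nhds_in_open) auto
    then show ?thesis by eventually_elim (use p in auto)
  qed
  have pos: "\<alpha> + \<beta> * t > 0" using p t by (simp add: add_pos_pos)
  have "isCont (\<lambda>x. (\<alpha> + \<beta> * x) powr (- \<gamma>)) t"
    using pos by (intro continuous_intros) auto
  then show "isCont \<rho> t" using isCont_cong[OF ev] by simp
qed

lemma power_density_in_densities: "power_density \<rho> \<Longrightarrow> \<rho> \<in> densities"
  by (simp add: power_density_def)

lemma power_density_exists: "\<exists>\<rho>. power_density \<rho>"
proof -
  define \<rho> where "\<rho> = (\<lambda>t::real. (1 + t) powr (- 2))"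
  have h: "((\<lambda>x::real. x powr (- 2)) has_integral - (1 powr (- 2 + 1)) / (- 2 + 1)) {1..}"
    by (rule has_integral_powr_to_inf) auto
  then have h': "((\<lambda>x::real. x powr (- 2)) has_integral 1) {1..}" by simp
  have si: "set_integrable lebesgue {1..} (\<lambda>x::real. x powr (- 2))"
    using h' by (intro nonnegative_absolutely_integrable_1) (auto simp: integrable_on_def)
  have li: "(LINT x:{1..}|lebesgue. (x::real) powr (- 2)) = 1"
    using set_lebesgue_integral_eq_integral(2)[OF si] integral_unique[OF h'] by simp
  define f where "f = (\<lambda>x::real. indicator {1..} x *\<^sub>R x powr (- 2))"
  have fi: "integrable lebesgue f" using si by (simp add: f_def set_integrable_def)
  have fs: "(\<lambda>x. f (1 + 1 * x)) = (\<lambda>x. indicator {0..} x *\<^sub>R \<rho> x)"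
    by (auto simp: f_def \<rho>_def fun_eq_iff indicator_def add.commute)
  have "integrable lebesgue (\<lambda>x. f (1 + 1 * x))"
    using lebesgue_integrable_real_affine_iff[of 1 f 1] fi by simp
  then have "set_integrable lebesgue {0..} \<rho>" unfolding set_integrable_def fs .
  moreover have "(LINT t:{0..}|lebesgue. \<rho> t) = 1"
  proof -
    have "integral\<^sup>L lebesgue f = \<bar>1\<bar> *\<^sub>R integral\<^sup>L lebesgue (\<lambda>x. f (1 + 1 * x))"
      by (rule lebesgue_integral_real_affine) simp
    then show ?thesis using li unfolding set_lebesgue_integral_def fs[symmetric] by (simp add: f_def)
  qed
  moreover have "\<forall>t\<ge>0. 0 \<le> \<rho> t" by (simp add: \<rho>_def)
  ultimately have "\<rho> \<in> densities" by (simp add: densities_def)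
  moreover have "\<forall>t\<ge>0. \<rho> t = (1 + 1 * t) powr (- 2)" by (simp add: \<rho>_def)
  ultimately have "power_density \<rho>" unfolding power_density_def
    by (intro conjI exI[of _ 1] exI[of _ 1] exI[of _ 2]) auto
  then show ?thesis by blast
qed

lemma rho_shift_power_density:
  assumes pd: "power_density \<rho>" and p: "\<alpha> > 0" "\<beta> > 0" "\<gamma> > 0" "\<forall>t\<ge>0. \<rho> t = (\<alpha> + \<beta> * t) powr (- \<gamma>)"
    and T: "T > 0"
  shows "\<forall>t\<ge>0. rho_shift \<rho> T t = rho_scale \<rho> (\<alpha> / (\<alpha> + \<beta> * T)) t"
proof -
  define l where "l = \<alpha> / (\<alpha> + \<beta> * T)"
  have aT: "\<alpha> + \<beta> * T > 0" using p T by (simp add: add_pos_pos)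
  have lpos: "l > 0" using p aT by (simp add: l_def)
  define k where "k = 1 / (l * l powr (- \<gamma>))"
  have kpos: "k > 0" using lpos by (simp add: k_def)
  have key: "\<rho> (t + T) = k * (l * \<rho> (l * t))" if t: "t \<ge> 0" for t
  proof -
    have e1: "\<alpha> + \<beta> * (l * t) = l * (\<alpha> + \<beta> * (t + T))"
      using aT by (simp add: l_def field_simps)
    have "l * \<rho> (l * t) = l * (l * (\<alpha> + \<beta> * (t + T))) powr (- \<gamma>)"
      using p(4) lpos t e1 by simp
    also have "\<dots> = l * l powr (- \<gamma>) * \<rho> (t + T)"
      using p(4) t T by (simp add: powr_mult)
    finally show ?thesis using lpos by (simp add: k_def)
  qed
  have rd: "rho_scale \<rho> l \<in> densities" by (rule rho_scale_in_densities[OF power_density_in_densities[OF pd] lpos])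
  have c: "(LINT s:{T..}|lebesgue. \<rho> s) = k"
  proof -
    have "(LINT s:{T..}|lebesgue. \<rho> s) = integral\<^sup>L lebesgue (\<lambda>s. indicator {T..} s *\<^sub>R \<rho> s)"
      by (simp add: set_lebesgue_integral_def)
    also have "\<dots> = \<bar>1\<bar> *\<^sub>R integral\<^sup>L lebesgue (\<lambda>x. indicator {T..} (T + 1 * x) *\<^sub>R \<rho> (T + 1 * x))"
      by (rule lebesgue_integral_real_affine) simp
    also have "(\<lambda>x. indicator {T..} (T + 1 * x) *\<^sub>R \<rho> (T + 1 * x)) = (\<lambda>x. k * weight (rho_scale \<rho> l) x)"
      using key by (auto simp: fun_eq_iff indicator_def weight_def rho_scale_def add.commute)
    also have "integral\<^sup>L lebesgue (\<lambda>x. k * weight (rho_scale \<rho> l) x) = k"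
      using rd by (simp add: densities_iff_weight)
    finally show ?thesis by simp
  qed
  show ?thesis
  proof (intro allI impI)
    fix t :: real assume t: "t \<ge> 0"
    show "rho_shift \<rho> T t = rho_scale \<rho> (\<alpha> / (\<alpha> + \<beta> * T)) t"
      using key[OF t] kpos c by (simp add: rho_shift_def rho_scale_def l_def[symmetric])
  qed
qed

section \<open>Value functions satisfying the dynamic programming principle\<close>

locale dpp_problem =
  fixes K :: "(real \<Rightarrow> 'w) set" and g :: "'w \<Rightarrow> real"
  assumes g_range: "\<And>\<omega>. 0 \<le> g \<omega> \<and> g \<omega> \<le> 1"
    and g_meas: "\<And>z. z \<in> K \<Longrightarrow> set_borel_measurable lebesgue {0..} (\<lambda>t. g (z t))"
    and start: "\<And>\<omega>. \<exists>z\<in>K. z 0 = \<omega>"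
    and dpp: "\<And>\<omega> \<rho> T. \<rho> \<in> densities \<Longrightarrow> T > 0 \<Longrightarrow>
       val K g \<rho> \<omega> =
         (SUP z \<in> {z \<in> K. z 0 = \<omega>}.
            (LINT t:{0..T}|lebesgue. \<rho> t * g (z t)) +
            (SUP z1 \<in> {z1 \<in> K. z1 0 = z T}. (LINT t:{0..}|lebesgue. \<rho> (t + T) * g (z1 t))))"
begin

abbreviation V where "V \<equiv> val K g"

abbreviation payoff where "payoff \<equiv> weighted_payoff g"

abbreviation "cesaro_limit U \<equiv> uniform_limit UNIV (\<lambda>T. V (varpi T)) U at_top"

abbreviation "scaled_limit \<mu> U \<equiv> uniform_limit UNIV (\<lambda>l. V (rho_scale \<mu> l)) U (at_right 0)"

lemma reward_measurable: "z \<in> K \<Longrightarrow> reward g z \<in> borel_measurable lebesgue"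
  using g_meas[of z] unfolding set_borel_measurable_def reward_def by simp

lemma reward_nonneg: "0 \<le> reward g z t"
  using g_range by (auto simp: reward_def)

lemma reward_le_1: "reward g z t \<le> 1"
  using g_range by (auto simp: reward_def indicator_def)

lemma reward_neg: "t < 0 \<Longrightarrow> reward g z t = 0"
  by (auto simp: reward_def)

lemma payoff_integrable:
  assumes "integrable lebesgue w" "z \<in> K"
  shows "integrable lebesgue (\<lambda>t. w t * reward g z t)"
proof (rule Bochner_Integration.integrable_bound[OF assms(1)])
  show "(\<lambda>t. w t * reward g z t) \<in> borel_measurable lebesgue"
    using assms by (intro borel_measurable_times reward_measurable borel_measurable_integrable)
  show "AE x in lebesgue. norm (w x * reward g z x) \<le> norm (w x)"
    using reward_nonneg reward_le_1 by (auto simp: abs_mult intro!: mult_left_le)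
qed

lemma payoff_mono:
  assumes "integrable lebesgue w1" "integrable lebesgue w2" "z \<in> K"
    "\<And>t. t \<ge> 0 \<Longrightarrow> w1 t \<le> w2 t"
  shows "payoff w1 z \<le> payoff w2 z"
  unfolding weighted_payoff_def
proof (rule integral_mono[OF payoff_integrable[OF assms(1,3)] payoff_integrable[OF assms(2,3)]])
  fix t show "w1 t * reward g z t \<le> w2 t * reward g z t"
    using assms(4)[of t] reward_nonneg[of z t] reward_neg[of t z]
    by (cases "t \<ge> 0") (auto intro: mult_right_mono)
qed

lemma payoff_add:
  assumes "integrable lebesgue w1" "integrable lebesgue w2" "z \<in> K"
  shows "payoff (\<lambda>t. w1 t + w2 t) z = payoff w1 z + payoff w2 z"
  unfolding weighted_payoff_def using payoff_integrable[OF assms(1,3)] payoff_integrable[OF assms(2,3)]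
  by (simp add: distrib_right)

lemma payoff_cmult:
  shows "payoff (\<lambda>t. c * w t) z = c * payoff w z"
  unfolding weighted_payoff_def by (simp add: mult.assoc)

lemma payoff_sum:
  assumes "finite I" "\<And>i. i \<in> I \<Longrightarrow> integrable lebesgue (w i)" "z \<in> K"
  shows "payoff (\<lambda>t. \<Sum>i\<in>I. w i t) z = (\<Sum>i\<in>I. payoff (w i) z)"
  unfolding weighted_payoff_def using assms
  by (simp add: sum_distrib_right payoff_integrable)

lemma payoff_nonneg:
  assumes "integrable lebesgue w" "z \<in> K" "\<And>t. t \<ge> 0 \<Longrightarrow> 0 \<le> w t"
  shows "0 \<le> payoff w z"
  unfolding weighted_payoff_def
proof (rule Bochner_Integration.integral_nonneg)
  fix t show "0 \<le> w t * reward g z t"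
    using assms(3)[of t] reward_nonneg[of z t] reward_neg[of t z] by (cases "t \<ge> 0") auto
qed

lemma payoff_le_integral:
  assumes "integrable lebesgue w" "z \<in> K" "\<And>t. t \<ge> 0 \<Longrightarrow> 0 \<le> w t"
  shows "payoff w z \<le> integral\<^sup>L lebesgue (\<lambda>t. indicator {0..} t * w t)"
  unfolding weighted_payoff_def
proof (rule integral_mono[OF payoff_integrable[OF assms(1,2)]])
  show "integrable lebesgue (\<lambda>t. indicator {0..} t * w t)"
    using integrable_mult_indicator[OF _ assms(1), of "{0..}"] by simp
  fix t show "w t * reward g z t \<le> indicator {0..} t * w t"
    using assms(3)[of t] reward_le_1[of z t] reward_neg[of t z]
    by (cases "t \<ge> 0") (auto intro: mult_left_le)
qed

lemma payoff_density_bounds: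
  assumes "\<rho> \<in> densities" "z \<in> K"
  shows "0 \<le> payoff (weight \<rho>) z" "payoff (weight \<rho>) z \<le> 1"
proof -
  show "0 \<le> payoff (weight \<rho>) z"
    using assms by (intro payoff_nonneg integrable_weight weight_nonneg)
  have "payoff (weight \<rho>) z \<le> integral\<^sup>L lebesgue (\<lambda>t. indicator {0..} t * weight \<rho> t)"
    using assms by (intro payoff_le_integral integrable_weight weight_nonneg)
  also have "(\<lambda>t. indicator {0..} t * weight \<rho> t) = weight \<rho>"
    by (auto simp: weight_def indicator_def)
  finally show "payoff (weight \<rho>) z \<le> 1" using assms(1) by (simp add: densities_iff_weight)
qed

lemma payoff_diff_abs_le:
  assumes "integrable lebesgue w1" "integrable lebesgue w2" "z \<in> K"
  shows "\<bar>payoff w1 z - payoff w2 z\<bar> \<le> integral\<^sup>L lebesgue (\<lambda>t. \<bar>w1 t - w2 t\<bar>)"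
proof -
  have "payoff w1 z - payoff w2 z = integral\<^sup>L lebesgue (\<lambda>t. (w1 t - w2 t) * reward g z t)"
    unfolding weighted_payoff_def using payoff_integrable[OF assms(1,3)] payoff_integrable[OF assms(2,3)]
    by (simp add: left_diff_distrib)
  also have "\<bar>\<dots>\<bar> \<le> integral\<^sup>L lebesgue (\<lambda>t. \<bar>(w1 t - w2 t) * reward g z t\<bar>)"
    by (rule integral_abs_bound)
  also have "\<dots> \<le> integral\<^sup>L lebesgue (\<lambda>t. \<bar>w1 t - w2 t\<bar>)"
  proof (rule integral_mono)
    show "integrable lebesgue (\<lambda>t. \<bar>(w1 t - w2 t) * reward g z t\<bar>)"
      using payoff_integrable[of "\<lambda>t. w1 t - w2 t" z] assms by auto
    show "integrable lebesgue (\<lambda>t. \<bar>w1 t - w2 t\<bar>)" using assms by auto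
    fix t show "\<bar>(w1 t - w2 t) * reward g z t\<bar> \<le> \<bar>w1 t - w2 t\<bar>"
      using reward_nonneg[of z t] reward_le_1[of z t] by (auto simp: abs_mult intro: mult_left_le)
  qed
  finally show ?thesis .
qed

lemma paths_from_nonempty: "{z \<in> K. z 0 = \<omega>} \<noteq> {}"
  using start[of \<omega>] by auto

lemma payoffs_bdd_above: "\<rho> \<in> densities \<Longrightarrow> bdd_above (payoff (weight \<rho>) ` {z \<in> K. z 0 = \<omega>})"
  using payoff_density_bounds by (intro bdd_aboveI[of _ 1]) auto

lemma payoff_le_val: "\<rho> \<in> densities \<Longrightarrow> z \<in> K \<Longrightarrow> payoff (weight \<rho>) z \<le> V \<rho> (z 0)"
  unfolding val_eq_SUP_payoff by (rule cSUP_upper[OF _ payoffs_bdd_above]) auto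

lemma val_le: "(\<And>z. z \<in> K \<Longrightarrow> z 0 = \<omega> \<Longrightarrow> payoff (weight \<rho>) z \<le> B) \<Longrightarrow> V \<rho> \<omega> \<le> B"
  unfolding val_eq_SUP_payoff by (rule cSUP_least[OF paths_from_nonempty]) auto

lemma val_approx:
  assumes "\<rho> \<in> densities" "e > 0"
  shows "\<exists>z\<in>K. z 0 = \<omega> \<and> V \<rho> \<omega> - e < payoff (weight \<rho>) z"
proof -
  have "V \<rho> \<omega> - e < V \<rho> \<omega>" using assms by simp
  then have "V \<rho> \<omega> - e < (SUP z \<in> {z \<in> K. z 0 = \<omega>}. payoff (weight \<rho>) z)"
    by (simp add: val_eq_SUP_payoff)
  then show ?thesis
    by (subst (asm) less_cSUP_iff[OF paths_from_nonempty payoffs_bdd_above[OF assms(1)]]) auto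
qed

lemma val_bounds:
  assumes "\<rho> \<in> densities"
  shows "0 \<le> V \<rho> \<omega>" "V \<rho> \<omega> \<le> 1"
proof -
  obtain z where z: "z \<in> K" "z 0 = \<omega>" using start by blast
  show "0 \<le> V \<rho> \<omega>" using payoff_density_bounds(1)[OF assms z(1)] payoff_le_val[OF assms z(1)] z(2) by simp
  show "V \<rho> \<omega> \<le> 1" using payoff_density_bounds(2)[OF assms] by (intro val_le) auto
qed

lemma uniform_limit_val_bounds:
  assumes u: "uniform_limit UNIV (\<lambda>s. V (F s)) U filt" and nb: "filt \<noteq> bot"
    and d: "eventually (\<lambda>s. F s \<in> densities) filt"
  shows "0 \<le> U \<omega>" "U \<omega> \<le> 1"
proof -
  have *: "\<exists>s. F s \<in> densities \<and> \<bar>V (F s) \<omega> - U \<omega>\<bar> < e" if "e > 0" for e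
  proof -
    have "eventually (\<lambda>s. F s \<in> densities \<and> (\<forall>\<omega>. \<bar>V (F s) \<omega> - U \<omega>\<bar> < e)) filt"
      using uniform_limit_eventually_abs_less[OF u that] d by eventually_elim auto
    from eventually_happens'[OF nb this] show ?thesis by blast
  qed
  show "0 \<le> U \<omega>"
  proof (rule ccontr)
    assume "\<not> 0 \<le> U \<omega>"
    then obtain s where "F s \<in> densities" "\<bar>V (F s) \<omega> - U \<omega>\<bar> < - U \<omega>" using *[of "- U \<omega>"] by auto
    with val_bounds(1)[of "F s" \<omega>] show False by linarith
  qed
  show "U \<omega> \<le> 1"
  proof (rule ccontr)
    assume "\<not> U \<omega> \<le> 1"
    then obtain s where "F s \<in> densities" "\<bar>V (F s) \<omega> - U \<omega>\<bar> < U \<omega> - 1" using *[of "U \<omega> - 1"] by auto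
    with val_bounds(2)[of "F s" \<omega>] show False by linarith
  qed
qed

lemma val_delay_eq_SUP:
  assumes "\<rho> \<in> densities" "c \<ge> 0"
  shows "V (delay \<rho> c) \<omega> = (SUP z \<in> {z \<in> K. z 0 = \<omega>}. V \<rho> (z c))"
proof (cases "c = 0")
  case True
  have "V (delay \<rho> c) = V \<rho>"
    using True by (intro val_cong) (auto simp: delay_def)
  moreover have "(SUP z \<in> {z \<in> K. z 0 = \<omega>}. V \<rho> (z c)) = (SUP z \<in> {z \<in> K. z 0 = \<omega>}. V \<rho> \<omega>)"
    using True by (intro SUP_cong) auto
  moreover have "(SUP z \<in> {z \<in> K. z 0 = \<omega>}. V \<rho> \<omega>) = V \<rho> \<omega>"
    using paths_from_nonempty by simp
  ultimately show ?thesis by simp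
next
  case False
  then have cpos: "c > 0" using assms by simp
  have "V (delay \<rho> c) \<omega> = (SUP z \<in> {z \<in> K. z 0 = \<omega>}.
            (LINT t:{0..c}|lebesgue. delay \<rho> c t * g (z t)) +
            (SUP z1 \<in> {z1 \<in> K. z1 0 = z c}. (LINT t:{0..}|lebesgue. delay \<rho> c (t + c) * g (z1 t))))"
    by (rule dpp[OF delay_in_densities[OF assms] cpos])
  also have "\<dots> = (SUP z \<in> {z \<in> K. z 0 = \<omega>}. V \<rho> (z c))"
  proof (intro SUP_cong refl)
    fix z
    have "(LINT t:{0..c}|lebesgue. delay \<rho> c t * g (z t)) = 0"
      unfolding set_lebesgue_integral_def
      by (rule integral_eq_zero_AE)
         (use AE_lebesgue_not_in_finite[of "{c}"] in \<open>auto elim!: eventually_mono simp: delay_def indicator_def\<close>)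
    moreover have "(LINT t:{0..}|lebesgue. delay \<rho> c (t + c) * g (z1 t)) =
                   (LINT t:{0..}|lebesgue. \<rho> t * g (z1 t))" for z1
      by (rule set_lebesgue_integral_cong) (auto simp: delay_def)
    ultimately show "(LINT t:{0..c}|lebesgue. delay \<rho> c t * g (z t)) +
            (SUP z1 \<in> {z1 \<in> K. z1 0 = z c}. (LINT t:{0..}|lebesgue. delay \<rho> c (t + c) * g (z1 t)))
           = V \<rho> (z c)"
      by (simp add: val_def)
  qed
  finally show ?thesis .
qed

lemma val_le_val_delay:
  assumes "\<rho> \<in> densities" "c \<ge> 0" "z \<in> K"
  shows "V \<rho> (z c) \<le> V (delay \<rho> c) (z 0)"
  unfolding val_delay_eq_SUP[OF assms(1,2)]
  by (rule cSUP_upper) (use assms val_bounds in \<open>auto intro!: bdd_aboveI[of _ 1]\<close>)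

lemma val_delay_le:
  assumes "\<rho> \<in> densities" "c \<ge> 0" "\<And>z. z \<in> K \<Longrightarrow> z 0 = \<omega> \<Longrightarrow> V \<rho> (z c) \<le> B"
  shows "V (delay \<rho> c) \<omega> \<le> B"
  unfolding val_delay_eq_SUP[OF assms(1,2)]
  by (rule cSUP_least[OF paths_from_nonempty]) (use assms in auto)

lemma payoff_varpi: "T > 0 \<Longrightarrow> payoff (weight (varpi T)) z = (1/T) * payoff (indicator {0..T}) z"
  using payoff_cmult[of "1/T" "indicator {0..T}" z] by (simp add: weight_varpi)

lemma payoff_indicator_le:
  assumes "z \<in> K" "0 \<le> a" "a \<le> b"
  shows "payoff (indicator {a..b}) z \<le> b - a"
proof -
  have "payoff (indicator {a..b}) z \<le> integral\<^sup>L lebesgue (\<lambda>t. indicator {0..} t * indicator {a..b} t)"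
    using assms integral_indicator_atLeastAtMost[of a b] by (intro payoff_le_integral) auto
  also have "(\<lambda>t. indicator {0..} t * indicator {a..b} t) = (indicator {a..b} :: real \<Rightarrow> real)"
    using assms by (auto simp: indicator_def fun_eq_iff)
  finally show ?thesis using integral_indicator_atLeastAtMost[OF assms(3)] by simp
qed

subsection \<open>The Cesaro limit\<close>

definition nonincreasing_along_paths :: "('w \<Rightarrow> real) \<Rightarrow> bool" where
  "nonincreasing_along_paths U \<longleftrightarrow> (\<forall>z\<in>K. \<forall>c\<ge>0. U (z c) \<le> U (z 0))"

definition window_bound :: "('w \<Rightarrow> real) \<Rightarrow> bool" where
  "window_bound U \<longleftrightarrow> (\<forall>e>0. \<exists>A. \<forall>z\<in>K. \<forall>a\<ge>0. \<forall>L\<ge>0.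
      payoff (indicator {a..a+L}) z \<le> L * (U (z 0) + e) + A)"

definition long_run_lower_bound :: "('w \<Rightarrow> real) \<Rightarrow> bool" where
  "long_run_lower_bound U \<longleftrightarrow> (\<forall>e>0. \<exists>T0. \<forall>T\<ge>T0. \<forall>\<omega>. \<exists>z\<in>K. z 0 = \<omega> \<and>
      T * (U \<omega> - e) \<le> payoff (indicator {0..T}) z)"

lemma eventually_varpi_in_densities: "eventually (\<lambda>T. varpi T \<in> densities) at_top"
  using eventually_gt_at_top[of 0] by eventually_elim (rule varpi_in_densities)

lemma cesaro_limit_bounds: "cesaro_limit U \<Longrightarrow> 0 \<le> U \<omega> \<and> U \<omega> \<le> 1"
  using uniform_limit_val_bounds[OF _ _ eventually_varpi_in_densities] by auto

lemma cesaro_limit_nonincreasing_along_paths: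
  assumes u: "cesaro_limit U"
  shows "nonincreasing_along_paths U"
  unfolding nonincreasing_along_paths_def
proof (intro ballI allI impI)
  fix z c assume z: "z \<in> K" and c: "(c::real) \<ge> 0"
  have le: "V (varpi T) (z c) \<le> ((T + c) / T) * V (varpi (T + c)) (z 0)" if T: "T > 0" for T
  proof -
    have "V (varpi T) (z c) \<le> V (delay (varpi T) c) (z 0)"
      using val_le_val_delay[OF varpi_in_densities[OF T] c z] .
    also have "\<dots> \<le> ((T + c) / T) * V (varpi (T + c)) (z 0)"
    proof (rule val_le)
      fix z' assume z': "z' \<in> K" "z' 0 = z 0"
      have "payoff (weight (delay (varpi T) c)) z' \<le> payoff (\<lambda>t. ((T + c) / T) * weight (varpi (T + c)) t) z'"
      proof (rule payoff_mono)
        show "integrable lebesgue (weight (delay (varpi T) c))"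
          by (rule integrable_weight[OF delay_in_densities[OF varpi_in_densities[OF T] c]])
        show "integrable lebesgue (\<lambda>t. (T + c) / T * weight (varpi (T + c)) t)"
          using integrable_weight[OF varpi_in_densities[of "T + c"]] T c by simp
        fix t :: real assume t: "0 \<le> t"
        show "weight (delay (varpi T) c) t \<le> (T + c) / T * weight (varpi (T + c)) t"
          using T c t by (auto simp: weight_def delay_def varpi_def indicator_def)
      qed (use z' in auto)
      also have "\<dots> = ((T + c) / T) * payoff (weight (varpi (T + c))) z'"
        by (rule payoff_cmult)
      also have "\<dots> \<le> ((T + c) / T) * V (varpi (T + c)) (z 0)"
        using payoff_le_val[OF varpi_in_densities[of "T+c"] z'(1)] z' T c
        by (intro mult_left_mono) auto
      finally show "payoff (weight (delay (varpi T) c)) z' \<le> ((T + c) / T) * V (varpi (T + c)) (z 0)" .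
    qed
    finally show ?thesis .
  qed
  have l1: "((\<lambda>T. V (varpi T) (z c)) \<longlongrightarrow> U (z c)) at_top"
    by (rule tendsto_uniform_limitI[OF u]) auto
  have l2': "((\<lambda>T. V (varpi T) (z 0)) \<longlongrightarrow> U (z 0)) at_top"
    by (rule tendsto_uniform_limitI[OF u]) auto
  have "((\<lambda>T. V (varpi (T + c)) (z 0)) \<longlongrightarrow> U (z 0)) at_top"
  proof -
    have "filterlim (\<lambda>T. T + c) at_top at_top" by real_asymp
    from filterlim_compose[OF l2' this] show ?thesis by simp
  qed
  moreover have "((\<lambda>T. (T + c) / T) \<longlongrightarrow> 1) at_top"
    by real_asymp
  ultimately have l2: "((\<lambda>T. ((T + c) / T) * V (varpi (T + c)) (z 0)) \<longlongrightarrow> 1 * U (z 0)) at_top"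
    by (intro tendsto_mult)
  show "U (z c) \<le> U (z 0)"
  proof (rule tendsto_le[OF trivial_limit_at_top_linorder _ l1])
    show "((\<lambda>T. ((T + c) / T) * V (varpi (T + c)) (z 0)) \<longlongrightarrow> U (z 0)) at_top"
      using l2 by simp
    show "\<forall>\<^sub>F x in at_top. V (varpi x) (z c) \<le> (x + c) / x * V (varpi (x + c)) (z 0)"
      using eventually_gt_at_top[of 0] by eventually_elim (rule le)
  qed
qed

lemma cesaro_limit_window_bound:
  assumes u: "cesaro_limit U"
  shows "window_bound U"
  unfolding window_bound_def
proof (intro allI impI)
  fix e :: real assume e: "e > 0"
  have inv: "nonincreasing_along_paths U" by (rule cesaro_limit_nonincreasing_along_paths[OF u])
  obtain N where N: "\<And>T \<omega>. T \<ge> N \<Longrightarrow> \<bar>V (varpi T) \<omega> - U \<omega>\<bar> < e"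
    using uniform_limit_eventually_abs_less[OF u e] unfolding eventually_at_top_linorder by blast
  define A where "A = max N 1"
  show "\<exists>A. \<forall>z\<in>K. \<forall>a\<ge>0. \<forall>L\<ge>0. payoff (indicator {a..a + L}) z \<le> L * (U (z 0) + e) + A"
  proof (intro exI ballI allI impI)
    fix z a L assume z: "z \<in> K" and a: "(a::real) \<ge> 0" and L: "(L::real) \<ge> 0"
    have U0: "0 \<le> U \<omega>" for \<omega> using cesaro_limit_bounds[OF u] by auto
    show "payoff (indicator {a..a + L}) z \<le> L * (U (z 0) + e) + A"
    proof (cases "L \<ge> A")
      case True
      then have Lpos: "L > 0" and LN: "L \<ge> N" by (auto simp: A_def)
      have "payoff (indicator {a..a + L}) z = L * payoff (weight (delay (varpi L) a)) z"
        using Lpos a payoff_cmult[of L "\<lambda>t. (1/L) * indicator {a..a+L} t" z] by (simp add: weight_delay_varpi)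
      also have "payoff (weight (delay (varpi L) a)) z \<le> V (delay (varpi L) a) (z 0)"
        by (rule payoff_le_val[OF delay_in_densities[OF varpi_in_densities[OF Lpos] a] z])
      also have "\<dots> \<le> U (z 0) + e"
      proof (rule val_delay_le[OF varpi_in_densities[OF Lpos] a])
        fix z' assume z': "z' \<in> K" "z' 0 = z 0"
        have "V (varpi L) (z' a) \<le> U (z' a) + e" using N[OF LN, of "z' a"] by simp
        also have "U (z' a) \<le> U (z' 0)" using inv z' a by (auto simp: nonincreasing_along_paths_def)
        finally show "V (varpi L) (z' a) \<le> U (z 0) + e" using z' by simp
      qed
      finally have "payoff (indicator {a..a + L}) z \<le> L * (U (z 0) + e)"
        using Lpos by (simp add: mult_left_mono)
      then show ?thesis using A_def by simp
    next
      case False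
      have "payoff (indicator {a..a + L}) z \<le> L" using payoff_indicator_le[OF z a, of "a + L"] L by simp
      also have "L \<le> L * (U (z 0) + e) + A" using False U0[of "z 0"] e L
        by (smt (verit) mult_nonneg_nonneg)
      finally show ?thesis .
    qed
  qed
qed

lemma cesaro_limit_long_run_lower_bound:
  assumes u: "cesaro_limit U"
  shows "long_run_lower_bound U"
  unfolding long_run_lower_bound_def
proof (intro allI impI)
  fix e :: real assume e: "e > 0"
  obtain N where N: "\<And>T \<omega>. T \<ge> N \<Longrightarrow> \<bar>V (varpi T) \<omega> - U \<omega>\<bar> < e/2"
    using uniform_limit_eventually_abs_less[OF u, of "e/2"] e unfolding eventually_at_top_linorder by auto
  show "\<exists>T0. \<forall>T\<ge>T0. \<forall>\<omega>. \<exists>z\<in>K. z 0 = \<omega> \<and> T * (U \<omega> - e) \<le> payoff (indicator {0..T}) z"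
  proof (intro exI[of _ "max N 1"] allI impI)
    fix T \<omega> assume T: "max N 1 \<le> (T::real)"
    then have Tpos: "T > 0" and TN: "T \<ge> N" by auto
    obtain z where z: "z \<in> K" "z 0 = \<omega>" "V (varpi T) \<omega> - e/2 < payoff (weight (varpi T)) z"
      using val_approx[OF varpi_in_densities[OF Tpos], of "e/2" \<omega>] e by auto
    have "U \<omega> - e \<le> (1/T) * payoff (indicator {0..T}) z"
    proof -
      have "U \<omega> - e/2 < V (varpi T) \<omega>" using N[OF TN, of \<omega>] by linarith
      then show ?thesis using z(3) payoff_varpi[OF Tpos, of z] by linarith
    qed
    then have "T * (U \<omega> - e) \<le> T * ((1/T) * payoff (indicator {0..T}) z)"
      using Tpos by (intro mult_left_mono) auto
    then show "\<exists>z\<in>K. z 0 = \<omega> \<and> T * (U \<omega> - e) \<le> payoff (indicator {0..T}) z"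
      using z Tpos by auto
  qed
qed

lemma window_long_run_imp_cesaro_limit:
  assumes W: "window_bound U" and L: "long_run_lower_bound U"
  shows "cesaro_limit U"
  unfolding uniform_limit_iff dist_real_def
proof (intro allI impI)
  fix e :: real assume e: "e > 0"
  obtain A where A: "\<And>z a L. z \<in> K \<Longrightarrow> a \<ge> 0 \<Longrightarrow> L \<ge> 0 \<Longrightarrow>
      payoff (indicator {a..a+L}) z \<le> L * (U (z 0) + e/2) + A"
    using W e unfolding window_bound_def by (meson half_gt_zero)
  obtain T0 where T0: "\<And>T \<omega>. T \<ge> T0 \<Longrightarrow> \<exists>z\<in>K. z 0 = \<omega> \<and> T * (U \<omega> - e/2) \<le> payoff (indicator {0..T}) z"
    using L e unfolding long_run_lower_bound_def by (meson half_gt_zero)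
  have "\<forall>\<^sub>F T in at_top. \<forall>\<omega>. \<bar>V (varpi T) \<omega> - U \<omega>\<bar> < e"
    unfolding eventually_at_top_linorder
  proof (intro exI[of _ "max (max T0 1) (2 * \<bar>A\<bar> / e + 1)"] allI impI)
    fix T \<omega> assume T: "max (max T0 1) (2 * \<bar>A\<bar> / e + 1) \<le> (T::real)"
    then have Tpos: "T > 0" and TT0: "T \<ge> T0" and TA: "T > 2 * \<bar>A\<bar> / e" by auto
    have AT: "A / T < e / 2"
    proof -
      have "2 * \<bar>A\<bar> < e * T" using TA e by (simp add: field_simps)
      then show ?thesis using Tpos by (simp add: field_simps)
    qed
    have up: "V (varpi T) \<omega> \<le> U \<omega> + e/2 + A / T"
    proof (rule val_le)
      fix z assume z: "z \<in> K" "z 0 = \<omega>"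
      have "payoff (indicator {0..T}) z \<le> T * (U \<omega> + e/2) + A"
        using A[OF z(1), of 0 T] Tpos z(2) by simp
      then have "(1/T) * payoff (indicator {0..T}) z \<le> (1/T) * (T * (U \<omega> + e/2) + A)"
        using Tpos by (intro mult_left_mono) auto
      then show "payoff (weight (varpi T)) z \<le> U \<omega> + e / 2 + A / T"
        using Tpos payoff_varpi[OF Tpos, of z] by (simp add: field_simps)
    qed
    obtain z where z: "z \<in> K" "z 0 = \<omega>" "T * (U \<omega> - e/2) \<le> payoff (indicator {0..T}) z"
      using T0[OF TT0] by blast
    have "U \<omega> - e/2 \<le> (1/T) * payoff (indicator {0..T}) z"
      using z(3) Tpos by (simp add: field_simps)
    also have "\<dots> = payoff (weight (varpi T)) z" using payoff_varpi[OF Tpos] by simp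
    also have "\<dots> \<le> V (varpi T) \<omega>" using payoff_le_val[OF varpi_in_densities[OF Tpos] z(1)] z(2) by simp
    finally show "\<bar>V (varpi T) \<omega> - U \<omega>\<bar> < e" using up AT e by linarith
  qed
  then show "\<forall>\<^sub>F T in at_top. \<forall>\<omega>\<in>UNIV. \<bar>V (varpi T) \<omega> - U \<omega>\<bar> < e" by simp
qed

subsection \<open>Limits for rescaled densities\<close>

lemma window_payoff_lower:
  assumes A: "\<And>a L. a \<ge> 0 \<Longrightarrow> L \<ge> 0 \<Longrightarrow> payoff (indicator {a..a+L}) z \<le> L * (u + e) + A"
    and z: "z \<in> K" and ab: "0 \<le> a" "a \<le> b" "b \<le> H" and e: "e \<ge> 0" and u: "u \<ge> 0"
    and H: "H * (u - e) \<le> payoff (indicator {0..H}) z"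
  shows "(b - a) * u - 2 * e * H - 2 * A \<le> payoff (indicator {a..b}) z"
proof -
  have "payoff (indicator {0..H}) z \<le> payoff (\<lambda>t. indicator {0..a} t + indicator {a..b} t + indicator {b..H} t) z"
  proof (rule payoff_mono[OF _ _ z])
    show "integrable lebesgue (indicator {0..H} :: real \<Rightarrow> real)" using integral_indicator_atLeastAtMost ab by auto
    show "integrable lebesgue (\<lambda>t. indicator {0..a} t + indicator {a..b} t + indicator {b..H} t :: real)"
      using integral_indicator_atLeastAtMost ab by auto
    fix t :: real show "(indicator {0..H} t :: real) \<le> indicator {0..a} t + indicator {a..b} t + indicator {b..H} t"
      using ab by (auto simp: indicator_def)
  qed
  also have "\<dots> = payoff (indicator {0..a}) z + payoff (indicator {a..b}) z + payoff (indicator {b..H}) z"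
    using integral_indicator_atLeastAtMost ab by (simp add: payoff_add z)
  finally have split: "payoff (indicator {0..H}) z \<le> payoff (indicator {0..a}) z + payoff (indicator {a..b}) z + payoff (indicator {b..H}) z" .
  have head: "payoff (indicator {0..a}) z \<le> a * (u + e) + A" using A[of 0 a] ab by simp
  have tail: "payoff (indicator {b..H}) z \<le> (H - b) * (u + e) + A" using A[of b "H - b"] ab by simp
  have "(b - a) * u - 2 * e * H - 2 * A \<le> H * (u - e) - a * (u + e) - (H - b) * (u + e) - 2 * A"
    using ab e by (simp add: algebra_simps mult_right_mono)
  also have "\<dots> \<le> payoff (indicator {a..b}) z" using split head tail H by linarith
  finally show ?thesis .
qed

lemma payoff_rescale_diff_le:
  assumes mu: "\<mu> \<in> densities" and h: "integrable lebesgue h" and l: "l > 0" and z: "z \<in> K"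
  shows "\<bar>payoff (weight (rho_scale \<mu> l)) z - payoff (\<lambda>t. l * h (l * t)) z\<bar>
    \<le> integral\<^sup>L lebesgue (\<lambda>t. \<bar>weight \<mu> t - h t\<bar>)"
proof -
  have "\<bar>payoff (weight (rho_scale \<mu> l)) z - payoff (\<lambda>t. l * h (l * t)) z\<bar>
      \<le> integral\<^sup>L lebesgue (\<lambda>t. \<bar>weight (rho_scale \<mu> l) t - l * h (l * t)\<bar>)"
    using integrable_weight[OF rho_scale_in_densities[OF mu l]] integral_rescale(1)[OF l h] z
    by (rule payoff_diff_abs_le)
  also have "(\<lambda>t. \<bar>weight (rho_scale \<mu> l) t - l * h (l * t)\<bar>) = (\<lambda>t. l * \<bar>weight \<mu> (l * t) - h (l * t)\<bar>)"
    using l by (simp add: weight_rho_scale fun_eq_iff right_diff_distrib[symmetric] abs_mult)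
  also have "integral\<^sup>L lebesgue \<dots> = integral\<^sup>L lebesgue (\<lambda>t. \<bar>weight \<mu> t - h t\<bar>)"
    using mu h by (intro integral_rescale(2)[OF l]) (simp add: integrable_weight)
  finally show ?thesis .
qed

lemma payoff_rescaled_step_fun:
  assumes ok: "step_data n a b c lo hi" and l: "l > 0" and z: "z \<in> K"
  shows "payoff (\<lambda>t. l * step_fun n a b c (l * t)) z
    = (\<Sum>i<n. (l * c i) * payoff (indicator {a i / l..b i / l}) z)"
proof -
  have "a i / l \<le> b i / l" if "i < n" for i
    using ok that l by (auto simp: step_data_def divide_right_mono)
  then have "payoff (\<lambda>t. l * step_fun n a b c (l * t)) z
      = (\<Sum>i<n. payoff (\<lambda>t. (l * c i) * indicator {a i / l..b i / l} t) z)"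
    unfolding step_fun_rescale[OF l] using integral_indicator_atLeastAtMost
    by (intro payoff_sum z) auto
  then show ?thesis by (simp only: payoff_cmult)
qed

lemma payoff_rescaled_step_fun_le:
  assumes ok: "step_data n a b c 0 Lb" and l: "l > 0" and z: "z \<in> K"
    and A: "\<And>a L. 0 \<le> a \<Longrightarrow> 0 \<le> L \<Longrightarrow> payoff (indicator {a..a+L}) z \<le> L * u + A"
  shows "payoff (\<lambda>t. l * step_fun n a b c (l * t)) z
    \<le> (\<Sum>i<n. c i * (b i - a i)) * u + l * A * (\<Sum>i<n. c i)"
proof -
  have "(l * c i) * payoff (indicator {a i / l..b i / l}) z \<le> c i * (b i - a i) * u + l * c i * A"
    if i: "i < n" for i
  proof -
    have abc: "0 \<le> a i" "a i \<le> b i" "0 \<le> c i" using ok i by (auto simp: step_data_def)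
    have "payoff (indicator {a i / l..a i / l + (b i - a i) / l}) z \<le> (b i - a i) / l * u + A"
      using abc l by (intro A) auto
    moreover have "a i / l + (b i - a i) / l = b i / l" by (simp add: diff_divide_distrib)
    ultimately have "(l * c i) * payoff (indicator {a i / l..b i / l}) z
        \<le> (l * c i) * ((b i - a i) / l * u + A)"
      using abc l by (intro mult_left_mono) auto
    also have "\<dots> = c i * (b i - a i) * u + l * c i * A"
      using l by (simp add: field_simps)
    finally show ?thesis .
  qed
  then have "payoff (\<lambda>t. l * step_fun n a b c (l * t)) z \<le> (\<Sum>i<n. c i * (b i - a i) * u + l * c i * A)"
    unfolding payoff_rescaled_step_fun[OF ok l z] by (intro sum_mono) simp
  also have "\<dots> = (\<Sum>i<n. c i * (b i - a i)) * u + l * A * (\<Sum>i<n. c i)"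
    by (simp add: sum.distrib sum_distrib_left sum_distrib_right mult_ac)
  finally show ?thesis .
qed

lemma payoff_rescaled_step_fun_ge:
  assumes ok: "step_data n a b c 0 Lb" and l: "l > 0" and z: "z \<in> K"
    and A: "\<And>a L. 0 \<le> a \<Longrightarrow> 0 \<le> L \<Longrightarrow> payoff (indicator {a..a+L}) z \<le> L * (u + \<epsilon>) + A"
    and \<epsilon>: "0 \<le> \<epsilon>" and u: "0 \<le> u"
    and H: "Lb / l * (u - \<epsilon>) \<le> payoff (indicator {0..Lb / l}) z"
  shows "(\<Sum>i<n. c i * (b i - a i)) * u - (\<Sum>i<n. c i) * (2 * \<epsilon> * Lb + 2 * l * A)
    \<le> payoff (\<lambda>t. l * step_fun n a b c (l * t)) z"
proof -
  have "c i * (b i - a i) * u - c i * (2 * \<epsilon> * Lb + 2 * l * A)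
      \<le> (l * c i) * payoff (indicator {a i / l..b i / l}) z" if i: "i < n" for i
  proof -
    have abc: "0 \<le> a i" "a i \<le> b i" "b i \<le> Lb" "0 \<le> c i" using ok i by (auto simp: step_data_def)
    have "(b i / l - a i / l) * u - 2 * \<epsilon> * (Lb / l) - 2 * A \<le> payoff (indicator {a i / l..b i / l}) z"
      using abc l \<epsilon> u H by (intro window_payoff_lower[OF A z]) (auto simp: divide_right_mono)
    then have "(l * c i) * ((b i / l - a i / l) * u - 2 * \<epsilon> * (Lb / l) - 2 * A)
        \<le> (l * c i) * payoff (indicator {a i / l..b i / l}) z"
      using abc l by (intro mult_left_mono) auto
    moreover have "(l * c i) * ((b i / l - a i / l) * u - 2 * \<epsilon> * (Lb / l) - 2 * A)
        = c i * (b i - a i) * u - c i * (2 * \<epsilon> * Lb + 2 * l * A)"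
      using l by (simp add: field_simps)
    ultimately show ?thesis by simp
  qed
  then have "(\<Sum>i<n. c i * (b i - a i) * u - c i * (2 * \<epsilon> * Lb + 2 * l * A))
      \<le> payoff (\<lambda>t. l * step_fun n a b c (l * t)) z"
    unfolding payoff_rescaled_step_fun[OF ok l z] by (intro sum_mono) simp
  moreover have "(\<Sum>i<n. c i * (b i - a i) * u - c i * (2 * \<epsilon> * Lb + 2 * l * A))
      = (\<Sum>i<n. c i * (b i - a i)) * u - (\<Sum>i<n. c i) * (2 * \<epsilon> * Lb + 2 * l * A)"
    by (simp add: sum_subtractf sum_distrib_left sum_distrib_right mult_ac)
  ultimately show ?thesis by simp
qed

lemma val_rho_scale_le:
  assumes mu: "\<mu> \<in> densities" and ok: "step_data n a b c 0 Lb" and l: "l > 0"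
    and A: "\<And>z a L. z \<in> K \<Longrightarrow> 0 \<le> a \<Longrightarrow> 0 \<le> L \<Longrightarrow>
      payoff (indicator {a..a+L}) z \<le> L * (U (z 0) + \<epsilon>) + A"
  shows "V (rho_scale \<mu> l) \<omega> \<le> (\<Sum>i<n. c i * (b i - a i)) * (U \<omega> + \<epsilon>) + l * A * (\<Sum>i<n. c i)
    + integral\<^sup>L lebesgue (\<lambda>t. \<bar>weight \<mu> t - step_fun n a b c t\<bar>)"
proof (rule val_le)
  fix z assume z: "z \<in> K" "z 0 = \<omega>"
  have "payoff (\<lambda>t. l * step_fun n a b c (l * t)) z
      \<le> (\<Sum>i<n. c i * (b i - a i)) * (U \<omega> + \<epsilon>) + l * A * (\<Sum>i<n. c i)"
    using A[OF z(1)] z(2) by (intro payoff_rescaled_step_fun_le[OF ok l z(1)]) auto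
  then show "payoff (weight (rho_scale \<mu> l)) z \<le> (\<Sum>i<n. c i * (b i - a i)) * (U \<omega> + \<epsilon>)
      + l * A * (\<Sum>i<n. c i) + integral\<^sup>L lebesgue (\<lambda>t. \<bar>weight \<mu> t - step_fun n a b c t\<bar>)"
    using payoff_rescale_diff_le[OF mu step_fun_integral(1)[OF ok] l z(1)] by linarith
qed

lemma val_rho_scale_ge:
  assumes mu: "\<mu> \<in> densities" and ok: "step_data n a b c 0 Lb" and l: "l > 0"
    and A: "\<And>z a L. z \<in> K \<Longrightarrow> 0 \<le> a \<Longrightarrow> 0 \<le> L \<Longrightarrow>
      payoff (indicator {a..a+L}) z \<le> L * (U (z 0) + \<epsilon>) + A"
    and \<epsilon>: "0 \<le> \<epsilon>" and U: "0 \<le> U \<omega>"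
    and z: "z \<in> K" "z 0 = \<omega>" "Lb / l * (U \<omega> - \<epsilon>) \<le> payoff (indicator {0..Lb / l}) z"
  shows "(\<Sum>i<n. c i * (b i - a i)) * U \<omega> - (\<Sum>i<n. c i) * (2 * \<epsilon> * Lb + 2 * l * A)
    - integral\<^sup>L lebesgue (\<lambda>t. \<bar>weight \<mu> t - step_fun n a b c t\<bar>) \<le> V (rho_scale \<mu> l) \<omega>"
proof -
  have "(\<Sum>i<n. c i * (b i - a i)) * U \<omega> - (\<Sum>i<n. c i) * (2 * \<epsilon> * Lb + 2 * l * A)
      \<le> payoff (\<lambda>t. l * step_fun n a b c (l * t)) z"
    using A[OF z(1)] z \<epsilon> U by (intro payoff_rescaled_step_fun_ge[OF ok l z(1)]) auto
  moreover have "payoff (weight (rho_scale \<mu> l)) z \<le> V (rho_scale \<mu> l) \<omega>"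
    using payoff_le_val[OF rho_scale_in_densities[OF mu l] z(1)] z(2) by simp
  ultimately show ?thesis
    using payoff_rescale_diff_le[OF mu step_fun_integral(1)[OF ok] l z(1)] by linarith
qed

lemma window_long_run_imp_scaled_limit:
  assumes W: "window_bound U" and L: "long_run_lower_bound U"
    and U01: "\<And>\<omega>. 0 \<le> U \<omega> \<and> U \<omega> \<le> 1"
    and mu: "\<mu> \<in> densities" and pc: "piecewise_continuous_pos \<mu>"
  shows "scaled_limit \<mu> U"
  unfolding uniform_limit_iff dist_real_def
proof (intro allI impI)
  fix e :: real assume e: "e > 0"
  define \<eta> where "\<eta> = min (e/20) (1/2)"
  have \<eta>: "\<eta> > 0" "\<eta> \<le> 1/2" "\<eta> \<le> e/20" using e by (auto simp: \<eta>_def)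
  obtain n a b c Lb where Lb: "0 < Lb" and ok: "step_data n a b c 0 Lb"
    and D: "integral\<^sup>L lebesgue (\<lambda>t. \<bar>weight \<mu> t - step_fun n a b c t\<bar>) \<le> 3 * \<eta>"
    by (rule density_L1_approx_step_fun[OF mu pc, of "3 * \<eta>"]) (use \<eta> in auto)
  define s where "s = step_fun n a b c"
  define S1 where "S1 = (\<Sum>i<n. c i * (b i - a i))"
  define C where "C = (\<Sum>i<n. c i)"
  have si: "integrable lebesgue s" and sint: "integral\<^sup>L lebesgue s = S1"
    using step_fun_integral[OF ok] by (auto simp: s_def S1_def)
  have C0: "0 \<le> C" unfolding C_def using ok by (intro sum_nonneg) (auto simp: step_data_def)
  have mass: "\<bar>S1 - 1\<bar> \<le> 3 * \<eta>"
  proof -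
    have "S1 - 1 = integral\<^sup>L lebesgue (\<lambda>t. s t - weight \<mu> t)"
      using sint si mu by (simp add: densities_iff_weight)
    also have "\<bar>\<dots>\<bar> \<le> integral\<^sup>L lebesgue (\<lambda>t. \<bar>weight \<mu> t - s t\<bar>)"
      using integral_abs_bound by (simp add: abs_minus_commute)
    finally show ?thesis using D by (simp add: s_def)
  qed
  define \<epsilon> where "\<epsilon> = \<eta> / (2 * Lb * C + 1)"
  have dpos: "2 * Lb * C + 1 > 0" using Lb C0 by (simp add: add_nonneg_pos)
  have \<epsilon>: "\<epsilon> > 0" "\<epsilon> \<le> \<eta>" "2 * \<epsilon> * Lb * C \<le> \<eta>"
  proof -
    show "\<epsilon> > 0" unfolding \<epsilon>_def using \<eta> dpos by (intro divide_pos_pos)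
    have "\<eta> \<le> \<eta> * (2 * Lb * C + 1)" using \<eta> Lb C0 by (simp add: mult_le_cancel_left1)
    then show "\<epsilon> \<le> \<eta>" unfolding \<epsilon>_def using dpos by (simp add: pos_divide_le_eq)
    have "\<eta> * (2 * Lb * C) \<le> \<eta> * (2 * Lb * C + 1)" using \<eta> by (intro mult_left_mono) auto
    then show "2 * \<epsilon> * Lb * C \<le> \<eta>" unfolding \<epsilon>_def using dpos by (simp add: pos_divide_le_eq)
  qed
  obtain A where A: "\<And>z a L. z \<in> K \<Longrightarrow> 0 \<le> a \<Longrightarrow> 0 \<le> L \<Longrightarrow>
      payoff (indicator {a..a+L}) z \<le> L * (U (z 0) + \<epsilon>) + \<bar>A\<bar>"
    using W \<epsilon>(1) unfolding window_bound_def by (meson abs_ge_self add_left_mono order_trans)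
  obtain T0 where T0: "\<And>T \<omega>. T \<ge> T0 \<Longrightarrow> \<exists>z\<in>K. z 0 = \<omega> \<and> T * (U \<omega> - \<epsilon>) \<le> payoff (indicator {0..T}) z"
    using L \<epsilon>(1) unfolding long_run_lower_bound_def by meson
  define lam1 where "lam1 = min (Lb / (\<bar>T0\<bar> + 1)) (\<eta> / (2 * (\<bar>A\<bar> + 1) * (C + 1)))"
  show "\<forall>\<^sub>F l in at_right 0. \<forall>\<omega>\<in>UNIV. \<bar>V (rho_scale \<mu> l) \<omega> - U \<omega>\<bar> < e"
    unfolding eventually_at_right_field
  proof (intro exI[of _ lam1] conjI allI impI ballI)
    show "0 < lam1" using Lb \<eta> C0 by (auto simp: lam1_def)
    fix l \<omega> assume l: "0 < l" "l < lam1"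
    have lA: "2 * l * \<bar>A\<bar> * C \<le> \<eta>"
    proof -
      have "l * (2 * (\<bar>A\<bar> + 1) * (C + 1)) < \<eta>"
        using l C0 by (simp add: lam1_def pos_less_divide_eq add_pos_nonneg)
      moreover have "2 * l * \<bar>A\<bar> * C \<le> l * (2 * (\<bar>A\<bar> + 1) * (C + 1))"
        using l C0 by (simp add: algebra_simps)
      ultimately show ?thesis by linarith
    qed
    have lT: "T0 \<le> Lb / l"
    proof -
      have "l * (\<bar>T0\<bar> + 1) < Lb" using l by (simp add: lam1_def field_simps)
      then have "\<bar>T0\<bar> + 1 < Lb / l" using l by (simp add: field_simps)
      then show ?thesis by linarith
    qed
    have up: "V (rho_scale \<mu> l) \<omega> \<le> U \<omega> + 10 * \<eta>"
    proof -
      have "S1 * (U \<omega> + \<epsilon>) \<le> (1 + 3 * \<eta>) * (U \<omega> + \<eta>)"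
        using mass U01[of \<omega>] \<epsilon> by (intro mult_mono) auto
      moreover have "(1 + 3 * \<eta>) * (U \<omega> + \<eta>) \<le> U \<omega> + 6 * \<eta>"
      proof -
        have "\<eta> * U \<omega> \<le> \<eta>" "\<eta> * \<eta> \<le> \<eta> * (1/2)"
          using U01[of \<omega>] \<eta> by (auto simp: mult_left_le intro: mult_left_mono)
        moreover have "(1 + 3 * \<eta>) * (U \<omega> + \<eta>) = U \<omega> + \<eta> + 3 * (\<eta> * U \<omega>) + 3 * (\<eta> * \<eta>)"
          by (simp add: algebra_simps)
        ultimately show ?thesis using \<eta> by linarith
      qed
      moreover have "0 \<le> l * \<bar>A\<bar> * C" using l C0 by simp
      moreover have "V (rho_scale \<mu> l) \<omega> \<le> S1 * (U \<omega> + \<epsilon>) + l * \<bar>A\<bar> * C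
          + integral\<^sup>L lebesgue (\<lambda>t. \<bar>weight \<mu> t - step_fun n a b c t\<bar>)"
        unfolding S1_def C_def by (rule val_rho_scale_le[OF mu ok l(1)]) (rule A)
      ultimately show ?thesis using D lA by linarith
    qed
    have lo: "U \<omega> - 8 * \<eta> \<le> V (rho_scale \<mu> l) \<omega>"
    proof -
      obtain z where z: "z \<in> K" "z 0 = \<omega>" "Lb / l * (U \<omega> - \<epsilon>) \<le> payoff (indicator {0..Lb / l}) z"
        using T0[OF lT] by blast
      have "U \<omega> - 3 * \<eta> \<le> S1 * U \<omega>"
      proof -
        have "(1 - 3 * \<eta>) * U \<omega> \<le> S1 * U \<omega>" using mass U01[of \<omega>] by (intro mult_right_mono) auto
        moreover have "3 * \<eta> * U \<omega> \<le> 3 * \<eta>" using U01[of \<omega>] \<eta> by simp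
        ultimately show ?thesis by (simp add: algebra_simps)
      qed
      moreover have "C * (2 * \<epsilon> * Lb + 2 * l * \<bar>A\<bar>) \<le> 2 * \<eta>"
        using \<epsilon>(3) lA by (simp add: algebra_simps)
      moreover have "S1 * U \<omega> - C * (2 * \<epsilon> * Lb + 2 * l * \<bar>A\<bar>)
          - integral\<^sup>L lebesgue (\<lambda>t. \<bar>weight \<mu> t - step_fun n a b c t\<bar>) \<le> V (rho_scale \<mu> l) \<omega>"
        unfolding S1_def C_def
        by (rule val_rho_scale_ge[OF mu ok l(1), where U = U and \<epsilon> = \<epsilon> and z = z])
          (use A \<epsilon> U01 z in auto)
      ultimately show ?thesis using D by linarith
    qed
    show "\<bar>V (rho_scale \<mu> l) \<omega> - U \<omega>\<bar> < e" using up lo \<eta> e by linarith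
  qed
qed

lemma payoff_delay_le_add:
  assumes r: "\<rho> \<in> densities" "antitone_nonneg \<rho>" and c: "c \<ge> 0" and z: "z \<in> K"
  shows "payoff (weight (delay \<rho> c)) z \<le> payoff (weight \<rho>) z + c * \<rho> 0"
proof -
  have d: "delay \<rho> c \<in> densities" by (rule delay_in_densities[OF r(1) c])
  have iR: "integrable lebesgue (weight \<rho>)" and iD: "integrable lebesgue (weight (delay \<rho> c))"
    using integrable_weight r(1) d by auto
  define r where "r = (\<lambda>t. indicator {c..} t * (weight (delay \<rho> c) t - weight \<rho> t))"
  have ir: "integrable lebesgue r" unfolding r_def
    using integrable_mult_indicator[OF _ Bochner_Integration.integrable_diff[OF iD iR], of "{c..}"] by simp
  have "payoff (weight (delay \<rho> c)) z \<le> payoff (\<lambda>t. weight \<rho> t + r t) z"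
  proof (rule payoff_mono[OF iD _ z])
    show "integrable lebesgue (\<lambda>t. weight \<rho> t + r t)" using iR ir by simp
    fix t :: real assume t: "0 \<le> t"
    show "weight (delay \<rho> c) t \<le> weight \<rho> t + r t"
      using t r(1) by (auto simp: r_def weight_def delay_def indicator_def densities_iff_weight)
  qed
  also have "\<dots> = payoff (weight \<rho>) z + payoff r z" by (rule payoff_add[OF iR ir z])
  also have "payoff r z \<le> integral\<^sup>L lebesgue (\<lambda>t. indicator {0..} t * r t)"
  proof (rule payoff_le_integral[OF ir z])
    fix t :: real assume t: "0 \<le> t"
    show "0 \<le> r t"
      using r c t by (auto simp: r_def weight_def delay_def indicator_def antitone_nonneg_def)
  qed
  also have "(\<lambda>t. indicator {0..} t * r t) = (\<lambda>t. weight (delay \<rho> c) t - weight \<rho> t + indicator {..<c} t * weight \<rho> t)"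
    using c by (auto simp: r_def weight_def delay_def indicator_def fun_eq_iff)
  also have "integral\<^sup>L lebesgue \<dots> = integral\<^sup>L lebesgue (weight (delay \<rho> c)) - integral\<^sup>L lebesgue (weight \<rho>)
      + integral\<^sup>L lebesgue (\<lambda>t. indicator {..<c} t * weight \<rho> t)"
    using iR iD integrable_mult_indicator[OF _ iR, of "{..<c}"] by simp
  also have "\<dots> = integral\<^sup>L lebesgue (\<lambda>t. indicator {..<c} t * weight \<rho> t)"
    using r(1) d by (simp add: densities_iff_weight)
  also have "\<dots> \<le> c * \<rho> 0" by (rule integral_initial_segment_le[OF r c])
  finally show ?thesis by simp
qed

lemma val_delay_le_antitone:
  assumes r: "\<rho> \<in> densities" "antitone_nonneg \<rho>" and c: "c \<ge> 0"
  shows "V (delay \<rho> c) \<omega> \<le> V \<rho> \<omega> + c * \<rho> 0"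
proof (rule val_le)
  fix z assume z: "z \<in> K" "z 0 = \<omega>"
  have "payoff (weight (delay \<rho> c)) z \<le> payoff (weight \<rho>) z + c * \<rho> 0" by (rule payoff_delay_le_add[OF r c z(1)])
  also have "payoff (weight \<rho>) z \<le> V \<rho> \<omega>" using payoff_le_val[OF r(1) z(1)] z(2) by simp
  finally show "payoff (weight (delay \<rho> c)) z \<le> V \<rho> \<omega> + c * \<rho> 0" by simp
qed

lemma eventually_rho_scale_in_densities: "\<mu> \<in> densities \<Longrightarrow> eventually (\<lambda>l. rho_scale \<mu> l \<in> densities) (at_right 0)"
  using eventually_at_right_less[of 0] by eventually_elim (rule rho_scale_in_densities)

lemma scaled_limit_bounds: "\<mu> \<in> densities \<Longrightarrow> scaled_limit \<mu> U \<Longrightarrow> 0 \<le> U \<omega> \<and> U \<omega> \<le> 1"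
  using uniform_limit_val_bounds[OF _ _ eventually_rho_scale_in_densities] by auto

lemma scaled_limit_nonincreasing_along_paths:
  assumes mu: "\<mu> \<in> densities" "antitone_nonneg \<mu>" and cc: "scaled_limit \<mu> U"
  shows "nonincreasing_along_paths U"
  unfolding nonincreasing_along_paths_def
proof (intro ballI allI impI)
  fix z c assume z: "z \<in> K" and c: "(c::real) \<ge> 0"
  have le: "V (rho_scale \<mu> l) (z c) \<le> V (rho_scale \<mu> l) (z 0) + c * (l * \<mu> 0)" if l: "l > 0" for l
  proof -
    have d: "rho_scale \<mu> l \<in> densities" "antitone_nonneg (rho_scale \<mu> l)"
      using rho_scale_in_densities[OF mu(1) l] antitone_nonneg_rho_scale[OF mu(2) l] by auto
    have "V (rho_scale \<mu> l) (z c) \<le> V (delay (rho_scale \<mu> l) c) (z 0)"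
      by (rule val_le_val_delay[OF d(1) c z])
    also have "\<dots> \<le> V (rho_scale \<mu> l) (z 0) + c * rho_scale \<mu> l 0"
      by (rule val_delay_le_antitone[OF d c])
    finally show ?thesis by (simp add: rho_scale_def)
  qed
  have l1: "((\<lambda>l. V (rho_scale \<mu> l) (z c)) \<longlongrightarrow> U (z c)) (at_right 0)"
    by (rule tendsto_uniform_limitI[OF cc]) auto
  have l2: "((\<lambda>l. V (rho_scale \<mu> l) (z 0) + c * (l * \<mu> 0)) \<longlongrightarrow> U (z 0) + c * (0 * \<mu> 0)) (at_right 0)"
    by (intro tendsto_intros tendsto_uniform_limitI[OF cc]) (auto intro: tendsto_ident_at)
  show "U (z c) \<le> U (z 0)"
  proof -
    have "U (z c) \<le> U (z 0) + c * (0 * \<mu> 0)"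
    proof (rule tendsto_le[OF _ l2 l1])
      show "at_right (0::real) \<noteq> bot" by simp
      show "\<forall>\<^sub>F x in at_right 0. V (rho_scale \<mu> x) (z c) \<le> V (rho_scale \<mu> x) (z 0) + c * (x * \<mu> 0)"
        using eventually_at_right_less[of 0] by eventually_elim (rule le)
    qed
    then show ?thesis by simp
  qed
qed

lemma payoff_delay_le_of_val_le:
  assumes r: "\<rho> \<in> densities" and inv: "nonincreasing_along_paths U"
    and Vb: "\<And>\<omega>. V \<rho> \<omega> \<le> U \<omega> + \<eta>" and c: "c \<ge> 0" and z: "z \<in> K"
  shows "payoff (weight (delay \<rho> c)) z \<le> U (z 0) + \<eta>"
proof -
  have "payoff (weight (delay \<rho> c)) z \<le> V (delay \<rho> c) (z 0)"
    by (rule payoff_le_val[OF delay_in_densities[OF r c] z])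
  also have "\<dots> \<le> U (z 0) + \<eta>"
  proof (rule val_delay_le[OF r c])
    fix z' assume z': "z' \<in> K" "z' 0 = z 0"
    have "V \<rho> (z' c) \<le> U (z' c) + \<eta>" by (rule Vb)
    also have "U (z' c) \<le> U (z' 0)" using inv z' c by (auto simp: nonincreasing_along_paths_def)
    finally show "V \<rho> (z' c) \<le> U (z 0) + \<eta>" using z' by simp
  qed
  finally show ?thesis .
qed

lemma payoff_indicator_split_le:
  assumes z: "z \<in> K" and a: "a \<ge> 0" and R: "R \<ge> 0" and L: "L \<ge> 0"
  shows "payoff (indicator {a..a+L}) z \<le> R + payoff (indicator {a+R..a+R+L}) z"
proof -
  have "payoff (indicator {a..a+L}) z \<le> payoff (\<lambda>t. indicator {a..a+R} t + indicator {a+R..a+R+L} t) z"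
  proof (rule payoff_mono[OF _ _ z])
    show "integrable lebesgue (indicator {a..a+L} :: real \<Rightarrow> real)"
      using integral_indicator_atLeastAtMost L by simp
    show "integrable lebesgue (\<lambda>t. indicator {a..a+R} t + indicator {a+R..a+R+L} t :: real)"
      using integral_indicator_atLeastAtMost R L by simp
    show "indicator {a..a+L} t \<le> (indicator {a..a+R} t + indicator {a+R..a+R+L} t :: real)" for t
      using R L by (auto simp: indicator_def)
  qed
  also have "\<dots> = payoff (indicator {a..a+R}) z + payoff (indicator {a+R..a+R+L}) z"
    using integral_indicator_atLeastAtMost R L by (subst payoff_add[OF _ _ z]) auto
  also have "payoff (indicator {a..a+R}) z \<le> R" using payoff_indicator_le[OF z a, of "a+R"] R by simp
  finally show ?thesis by simp
qed

lemma window_bound_from_val: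
  assumes r: "\<rho> \<in> densities" "antitone_nonneg \<rho>" and inv: "nonincreasing_along_paths U"
    and U01: "\<And>\<omega>. 0 \<le> U \<omega> \<and> U \<omega> \<le> 1"
    and Vb: "\<And>\<omega>. V \<rho> \<omega> \<le> U \<omega> + \<eta>" and \<eta>: "0 < \<eta>" "\<eta> \<le> 1/4"
    and R: "R \<ge> 1" "integral\<^sup>L lebesgue (\<lambda>x. indicator {R..} x * weight \<rho> x) < \<eta>"
    and z: "z \<in> K" and a: "a \<ge> 0" and L: "L \<ge> 0"
  shows "payoff (indicator {a..a+L}) z \<le> L * (U (z 0) + 3 * \<eta>) + (3 * R + 2)"
proof -
  define X where "X = L + R + 1"
  define N where "N = nat \<lceil>X * (\<rho> 0 + 1) / \<eta>\<rceil> + 1"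
  define d where "d = X / real N"
  have X1: "X \<ge> 1" using L R by (simp add: X_def)
  have Npos: "real N > 0" by (simp add: N_def)
  have dpos: "d > 0" using X1 Npos by (simp add: d_def)
  have dN: "d * real N = X" using Npos by (simp add: d_def)
  have dM1: "d * (\<rho> 0 + 1) \<le> \<eta>"
  proof -
    have "X * (\<rho> 0 + 1) / \<eta> < real N" unfolding N_def by linarith
    then have "X * (\<rho> 0 + 1) < \<eta> * real N" using \<eta> by (simp add: field_simps)
    then show ?thesis using Npos by (simp add: d_def field_simps)
  qed
  have "0 \<le> d * \<rho> 0" using r(1) dpos by (simp add: densities_iff_weight)
  then have dM: "d * \<rho> 0 \<le> \<eta>" and d_le: "d \<le> \<eta>" using dM1 dpos by (simp_all add: algebra_simps)
  define u where "u = U (z 0)"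
  define c where "c j = a + real j * d" for j
  have dd: "delay \<rho> (c j) \<in> densities" for j using a dpos by (intro delay_in_densities[OF r(1)]) (simp add: c_def)
  \<comment> \<open>N delayed copies of \<rho> on a grid of mesh d dominate (1 - 2\<eta>)/d times the window
    indicator, and each copy has payoff at most U (z 0) + \<eta>.\<close>
  define \<phi> where "\<phi> t = (\<Sum>j<N. weight (delay \<rho> (c j)) t)" for t
  have \<phi>i: "integrable lebesgue \<phi>" unfolding \<phi>_def using integrable_weight[OF dd] by auto
  have payoff_\<phi>: "payoff \<phi> z \<le> real N * (u + \<eta>)"
  proof -
    have "payoff \<phi> z = (\<Sum>j<N. payoff (weight (delay \<rho> (c j))) z)"
      unfolding \<phi>_def by (rule payoff_sum) (use integrable_weight[OF dd] z in auto)
    also have "\<dots> \<le> (\<Sum>j<N. u + \<eta>)" using a dpos unfolding u_def c_def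
      by (intro sum_mono payoff_delay_le_of_val_le[OF r(1) inv Vb _ z]) simp
    finally show ?thesis by simp
  qed
  define \<kappa> where "\<kappa> = (1 - 2 * \<eta>) / d"
  have pw: "\<kappa> * indicator {a+R..a+R+L} t \<le> \<phi> t" for t
  proof (cases "t \<in> {a+R..a+R+L}")
    case True
    then have "a + d \<le> t" "t - a < real N * d" "R \<le> t - a"
      using d_le \<eta> R dN by (auto simp: X_def mult.commute)
    from delay_sum_lower[OF r dpos a this] have "1 - 2 * \<eta> \<le> d * \<phi> t"
      using dM R(2) unfolding \<phi>_def c_def by linarith
    then show ?thesis using True dpos by (simp add: \<kappa>_def divide_le_eq mult.commute)
  next
    case False
    then show ?thesis unfolding \<phi>_def by (simp add: sum_nonneg weight_nonneg[OF dd])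
  qed
  define Q where "Q = payoff (indicator {a+R..a+R+L}) z"
  have "\<kappa> * Q \<le> payoff \<phi> z"
    unfolding Q_def payoff_cmult[symmetric] using integral_indicator_atLeastAtMost[of "a+R" "a+R+L"] L
    by (intro payoff_mono[OF _ \<phi>i z] pw) simp_all
  then have "(1 - 2 * \<eta>) * Q \<le> d * (real N * (u + \<eta>))"
    using payoff_\<phi> dpos mult_left_mono[of "\<kappa> * Q" "real N * (u + \<eta>)" d] by (simp add: \<kappa>_def)
  then have q1: "(1 - 2 * \<eta>) * Q \<le> X * (u + \<eta>)" using dN by (simp add: mult.assoc[symmetric])
  have "Q \<le> X" using payoff_indicator_le[OF z, of "a+R" "a+R+L"] a R L by (simp add: Q_def X_def)
  then have "2 * \<eta> * Q \<le> 2 * \<eta> * X" using \<eta> by (intro mult_left_mono) auto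
  then have q2: "Q \<le> X * (u + 3 * \<eta>)" using q1 by (simp add: algebra_simps)
  have "(R + 1) * (u + 3 * \<eta>) \<le> (R + 1) * 2"
    using U01[of "z 0"] \<eta> R by (intro mult_left_mono) (auto simp: u_def)
  then have "R + X * (u + 3 * \<eta>) \<le> L * (u + 3 * \<eta>) + (3 * R + 2)"
    by (simp add: X_def algebra_simps)
  then show ?thesis
    using payoff_indicator_split_le[OF z a _ L, of R] R q2 by (simp add: Q_def u_def)
qed

lemma scaled_limit_window_bound:
  assumes mu: "\<mu> \<in> densities" "antitone_nonneg \<mu>" and cc: "scaled_limit \<mu> U"
  shows "window_bound U"
  unfolding window_bound_def
proof (intro allI impI)
  fix e :: real assume e: "e > 0"
  define \<eta> where "\<eta> = min (e/3) (1/4)"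
  have \<eta>: "0 < \<eta>" "\<eta> \<le> 1/4" "3 * \<eta> \<le> e" using e by (auto simp: \<eta>_def)
  have inv: "nonincreasing_along_paths U" by (rule scaled_limit_nonincreasing_along_paths[OF mu cc])
  have U0: "0 \<le> U \<omega>" and U1: "U \<omega> \<le> 1" for \<omega> using scaled_limit_bounds[OF mu(1) cc] by auto
  obtain b where b: "b > 0" "\<And>l. l > 0 \<Longrightarrow> l < b \<Longrightarrow> \<forall>\<omega>. \<bar>V (rho_scale \<mu> l) \<omega> - U \<omega>\<bar> < \<eta>"
    using uniform_limit_eventually_abs_less[OF cc \<eta>(1)] unfolding eventually_at_right_field by auto
  define l0 where "l0 = b / 2"
  have l0: "l0 > 0" "l0 < b" using b by (auto simp: l0_def)
  define \<rho> where "\<rho> = rho_scale \<mu> l0"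
  have r: "\<rho> \<in> densities" "antitone_nonneg \<rho>" using rho_scale_in_densities[OF mu(1) l0(1)] antitone_nonneg_rho_scale[OF mu(2) l0(1)]
    by (auto simp: \<rho>_def)
  have Vb: "V \<rho> \<omega> \<le> U \<omega> + \<eta>" for \<omega>
  proof -
    have "\<bar>V \<rho> \<omega> - U \<omega>\<bar> < \<eta>" using b(2)[OF l0] by (simp add: \<rho>_def)
    then show ?thesis by linarith
  qed
  obtain L0 where L0: "\<And>L. L \<ge> L0 \<Longrightarrow> \<bar>integral\<^sup>L lebesgue (\<lambda>x. indicator {L..} x * weight \<rho> x)\<bar> < \<eta>"
    using tail_integral_small[OF integrable_weight[OF r(1)] \<eta>(1)] by blast
  define R where "R = max L0 1"
  have R: "R \<ge> 1" "integral\<^sup>L lebesgue (\<lambda>x. indicator {R..} x * weight \<rho> x) < \<eta>"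
    using L0[of R] by (auto simp: R_def)
  show "\<exists>A. \<forall>z\<in>K. \<forall>a\<ge>0. \<forall>L\<ge>0. payoff (indicator {a..a + L}) z \<le> L * (U (z 0) + e) + A"
  proof (intro exI[of _ "3 * R + 2"] ballI allI impI)
    fix z a L assume z: "z \<in> K" and a: "(a::real) \<ge> 0" and L: "(L::real) \<ge> 0"
    have "payoff (indicator {a..a+L}) z \<le> L * (U (z 0) + 3 * \<eta>) + (3 * R + 2)"
      using U0 U1 by (intro window_bound_from_val[OF r inv _ Vb \<eta>(1,2) R z a L]) auto
    also have "L * (U (z 0) + 3 * \<eta>) \<le> L * (U (z 0) + e)" using L \<eta> by (intro mult_left_mono) auto
    finally show "payoff (indicator {a..a + L}) z \<le> L * (U (z 0) + e) + (3 * R + 2)" by simp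
  qed
qed

lemma payoff_weight_le_grid_sum:
  assumes r: "\<rho> \<in> densities" "antitone_nonneg \<rho>" and \<Delta>: "\<Delta> > 0" and z: "z \<in> K"
  shows "payoff (weight \<rho>) z
    \<le> (\<Sum>i<m. \<rho> (real i * \<Delta>) * payoff (indicator {real i * \<Delta>..<real (Suc i) * \<Delta>}) z)
       + integral\<^sup>L lebesgue (\<lambda>t. indicator {real m * \<Delta>..} t * weight \<rho> t)"
proof -
  define I where "I i = (indicator {real i * \<Delta>..<real (Suc i) * \<Delta>} :: real \<Rightarrow> real)" for i
  have Ii: "integrable lebesgue (I i)" for i
    unfolding I_def using integral_indicator_atLeastLessThan[of "real i * \<Delta>" "real (Suc i) * \<Delta>"] \<Delta> by simp
  have wri: "integrable lebesgue (weight \<rho>)" by (rule integrable_weight[OF r(1)])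
  have it: "integrable lebesgue (\<lambda>t. indicator {real m * \<Delta>..} t * weight \<rho> t)"
    using integrable_mult_indicator[OF _ wri] by simp
  have isum: "integrable lebesgue (\<lambda>t. \<Sum>i<m. \<rho> (real i * \<Delta>) * I i t)" using Ii by auto
  have "payoff (weight \<rho>) z
      \<le> payoff (\<lambda>t. (\<Sum>i<m. \<rho> (real i * \<Delta>) * I i t) + indicator {real m * \<Delta>..} t * weight \<rho> t) z"
    using it isum unfolding I_def by (intro payoff_mono[OF wri _ z] weight_le_grid_majorant[OF r \<Delta>]) auto
  also have "\<dots> = payoff (\<lambda>t. \<Sum>i<m. \<rho> (real i * \<Delta>) * I i t) z
      + payoff (\<lambda>t. indicator {real m * \<Delta>..} t * weight \<rho> t) z"
    by (rule payoff_add[OF isum it z])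
  also have "payoff (\<lambda>t. \<Sum>i<m. \<rho> (real i * \<Delta>) * I i t) z = (\<Sum>i<m. \<rho> (real i * \<Delta>) * payoff (I i) z)"
    by (subst payoff_sum) (use Ii z in \<open>auto simp: payoff_cmult\<close>)
  also have "payoff (\<lambda>t. indicator {real m * \<Delta>..} t * weight \<rho> t) z
      \<le> integral\<^sup>L lebesgue (\<lambda>t. indicator {0..} t * (indicator {real m * \<Delta>..} t * weight \<rho> t))"
    by (rule payoff_le_integral[OF it z]) (simp add: weight_nonneg[OF r(1)])
  also have "(\<lambda>t. indicator {0..} t * (indicator {real m * \<Delta>..} t * weight \<rho> t))
      = (\<lambda>t. indicator {real m * \<Delta>..} t * weight \<rho> t)"
    by (auto simp: fun_eq_iff indicator_def weight_def)
  finally show ?thesis by (simp add: I_def)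
qed

lemma sum_payoff_grid_le:
  assumes \<Delta>: "\<Delta> > 0" and z: "z \<in> K"
  shows "(\<Sum>i<n. payoff (indicator {real i * \<Delta>..<real (Suc i) * \<Delta>}) z) \<le> payoff (indicator {0..real n * \<Delta>}) z"
proof -
  have "(\<Sum>i<n. payoff (indicator {real i * \<Delta>..<real (Suc i) * \<Delta>}) z)
      = payoff (\<lambda>t. \<Sum>i<n. indicator {real i * \<Delta>..<real (Suc i) * \<Delta>} t) z"
    using integral_indicator_atLeastLessThan \<Delta> by (intro payoff_sum[symmetric] z) auto
  also have "\<dots> = payoff (indicator {0..<real n * \<Delta>}) z"
    by (simp only: sum_indicator_grid[OF \<Delta>])
  also have "\<dots> \<le> payoff (indicator {0..real n * \<Delta>}) z"
    using integral_indicator_atLeastLessThan integral_indicator_atLeastAtMost \<Delta>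
    by (intro payoff_mono z) (auto simp: indicator_def)
  finally show ?thesis .
qed

lemma payoff_antitone_le_grid_bound:
  assumes r: "\<rho> \<in> densities" "antitone_nonneg \<rho>" and \<Delta>: "\<Delta> > 0" and z: "z \<in> K"
    and nm: "n \<le> m" and m: "0 < m"
    and cell: "\<And>i. payoff (indicator {real i * \<Delta>..<real (Suc i) * \<Delta>}) z \<le> D"
  shows "payoff (weight \<rho>) z \<le> D * (\<rho> 0 + 1 / \<Delta>)
      - \<rho> (real n * \<Delta>) * (real n * D - payoff (indicator {0..real n * \<Delta>}) z)
      + integral\<^sup>L lebesgue (\<lambda>t. indicator {real m * \<Delta>..} t * weight \<rho> t)"
proof -
  define d where "d i = payoff (indicator {real i * \<Delta>..<real (Suc i) * \<Delta>}) z" for i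
  have rnn: "0 \<le> \<rho> x" if "x \<ge> 0" for x using r(1) that by (simp add: densities_iff_weight)
  have "0 \<le> d 0" unfolding d_def using integral_indicator_atLeastLessThan \<Delta> by (intro payoff_nonneg z) auto
  then have D0: "0 \<le> D" using cell[of 0] by (simp add: d_def)
  have abel: "(\<Sum>i<m. \<rho> (real i * \<Delta>) * d i)
      \<le> D * (\<Sum>i<m. \<rho> (real i * \<Delta>)) - \<rho> (real n * \<Delta>) * (real n * D - (\<Sum>i<n. d i))"
  proof (rule sum_mult_le_deficit[OF nm])
    show "0 \<le> \<rho> (real i * \<Delta>)" for i using \<Delta> by (intro rnn) simp
    show "d i \<le> D" for i using cell by (simp add: d_def)
    show "\<rho> (real n * \<Delta>) \<le> \<rho> (real i * \<Delta>)" if "i < n" for i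
      using that \<Delta> r(2) by (auto simp: antitone_nonneg_def intro: mult_right_mono)
  qed
  have "(\<Sum>i<n. d i) \<le> payoff (indicator {0..real n * \<Delta>}) z"
    unfolding d_def by (rule sum_payoff_grid_le[OF \<Delta> z])
  then have cells: "\<rho> (real n * \<Delta>) * (\<Sum>i<n. d i) \<le> \<rho> (real n * \<Delta>) * payoff (indicator {0..real n * \<Delta>}) z"
    using rnn[of "real n * \<Delta>"] \<Delta> by (intro mult_left_mono) auto
  obtain k where k: "m = Suc k" using m by (cases m) auto
  have "\<Delta> * (\<Sum>i<m. \<rho> (real i * \<Delta>)) \<le> \<Delta> * \<rho> 0 + 1"
    unfolding k by (rule riemann_sum_le[OF r \<Delta>])
  then have "(\<Sum>i<m. \<rho> (real i * \<Delta>)) \<le> \<rho> 0 + 1 / \<Delta>" using \<Delta> by (simp add: field_simps)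
  then have riemann: "D * (\<Sum>i<m. \<rho> (real i * \<Delta>)) \<le> D * (\<rho> 0 + 1 / \<Delta>)" using D0 by (rule mult_left_mono)
  have "payoff (weight \<rho>) z \<le> (\<Sum>i<m. \<rho> (real i * \<Delta>) * d i)
      + integral\<^sup>L lebesgue (\<lambda>t. indicator {real m * \<Delta>..} t * weight \<rho> t)"
    unfolding d_def by (rule payoff_weight_le_grid_sum[OF r \<Delta> z])
  then show ?thesis using abel cells riemann by (simp add: right_diff_distrib)
qed

lemma scaled_limit_long_run_lower_bound:
  assumes mu: "\<mu> \<in> densities" "antitone_nonneg \<mu>" and mpos: "\<mu> 1 > 0"
    and cc: "scaled_limit \<mu> U" and W: "window_bound U"
  shows "long_run_lower_bound U"
  unfolding long_run_lower_bound_def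
proof (intro allI impI)
  fix e :: real assume e: "e > 0"
  have U0: "0 \<le> U \<omega>" and U1: "U \<omega> \<le> 1" for \<omega> using scaled_limit_bounds[OF mu(1) cc] by auto
  have m00: "0 \<le> \<mu> 0" using mu(1) by (simp add: densities_iff_weight)
  define \<kappa> where "\<kappa> = \<mu> 1 * e"
  have \<kappa>: "\<kappa> > 0" using mpos e by (simp add: \<kappa>_def)
  define \<epsilon> where "\<epsilon> = min (\<kappa>/6) 1"
  have \<epsilon>: "0 < \<epsilon>" "\<epsilon> \<le> \<kappa>/6" "\<epsilon> \<le> 1" using \<kappa> by (auto simp: \<epsilon>_def)
  obtain A0 where A0: "\<And>z a L. z \<in> K \<Longrightarrow> a \<ge> 0 \<Longrightarrow> L \<ge> 0 \<Longrightarrow>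
      payoff (indicator {a..a+L}) z \<le> L * (U (z 0) + \<epsilon>) + A0"
    using W \<epsilon>(1) unfolding window_bound_def by meson
  define A where "A = \<bar>A0\<bar>"
  have A: "A \<ge> 0" "A0 \<le> A" by (auto simp: A_def)
  define n where "n = nat \<lceil>12 * \<mu> 0 / \<kappa>\<rceil> + 1"
  have n1: "real n \<ge> 1" by (simp add: n_def)
  have nb: "2 * \<mu> 0 / real n \<le> \<kappa> / 6"
  proof -
    have "12 * \<mu> 0 / \<kappa> \<le> real n" unfolding n_def by linarith
    then have "12 * \<mu> 0 \<le> real n * \<kappa>" using \<kappa> by (simp add: field_simps)
    then show ?thesis using n1 \<kappa> by (simp add: field_simps)
  qed
  obtain L0 where L0: "\<And>L. L \<ge> L0 \<Longrightarrow> \<bar>integral\<^sup>L lebesgue (\<lambda>x. indicator {L..} x * weight \<mu> x)\<bar> < \<kappa>/6"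
    using tail_integral_small[OF integrable_weight[OF mu(1)], of "\<kappa>/6"] \<kappa> by auto
  define Q where "Q = nat \<lceil>L0\<rceil> + 1"
  have tailQ: "integral\<^sup>L lebesgue (\<lambda>x. indicator {real Q..} x * weight \<mu> x) < \<kappa>/6"
    using L0[of "real Q"] unfolding Q_def by linarith
  define m where "m = n * Q"
  obtain b where b: "b > 0" "\<And>l. l > 0 \<Longrightarrow> l < b \<Longrightarrow> \<forall>\<omega>. \<bar>V (rho_scale \<mu> l) \<omega> - U \<omega>\<bar> < \<kappa>/12"
    using uniform_limit_eventually_abs_less[OF cc, of "\<kappa>/12"] \<kappa> unfolding eventually_at_right_field by auto
  define l1 where "l1 = min b (\<kappa> / (6 * (A + 1) * (\<mu> 0 + real n + 1)))"
  have l1: "l1 > 0" using b \<kappa> A m00 by (auto simp: l1_def intro!: divide_pos_pos mult_pos_pos add_nonneg_pos)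
  show "\<exists>T0. \<forall>T\<ge>T0. \<forall>\<omega>. \<exists>z\<in>K. z 0 = \<omega> \<and> T * (U \<omega> - e) \<le> payoff (indicator {0..T}) z"
  proof (intro exI[of _ "2 / l1"] allI impI)
    fix T \<omega> assume T: "2 / l1 \<le> (T::real)"
    have Tpos: "T > 0" using T l1 by (smt (verit) divide_pos_pos)
    define l where "l = 1 / T"
    have lpos: "l > 0" and lT: "l * T = 1" using Tpos by (simp_all add: l_def)
    have ll1: "l < l1"
    proof -
      have "1 / l1 < 2 / l1" using l1 by (simp add: divide_strict_right_mono)
      then have "1 / l1 < T" using T by linarith
      then show ?thesis using l1 Tpos by (simp add: l_def field_simps)
    qed
    define \<rho> where "\<rho> = rho_scale \<mu> l"
    have r: "\<rho> \<in> densities" "antitone_nonneg \<rho>"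
      using rho_scale_in_densities[OF mu(1) lpos] antitone_nonneg_rho_scale[OF mu(2) lpos] by (auto simp: \<rho>_def)
    have "\<bar>V \<rho> \<omega> - U \<omega>\<bar> < \<kappa>/12" using b(2)[OF lpos] ll1 by (simp add: \<rho>_def l1_def)
    then have "U \<omega> - \<kappa>/12 < V \<rho> \<omega>" by linarith
    moreover obtain z where z: "z \<in> K" "z 0 = \<omega>" "V \<rho> \<omega> - \<kappa>/12 < payoff (weight \<rho>) z"
      using val_approx[OF r(1), of "\<kappa>/12" \<omega>] \<kappa> by auto
    ultimately have Jlow: "U \<omega> - \<kappa>/6 < payoff (weight \<rho>) z" by linarith
    define F where "F = payoff (indicator {0..T}) z"
    define \<Delta> where "\<Delta> = T / real n"
    have Dpos: "\<Delta> > 0" and nD: "real n * \<Delta> = T" using Tpos n1 by (simp_all add: \<Delta>_def)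
    have mD: "real m * \<Delta> = real Q / l" using n1 Tpos by (simp add: m_def \<Delta>_def l_def)
    define D where "D = \<Delta> * (U \<omega> + \<epsilon>) + A"
    have cell: "payoff (indicator {real i * \<Delta>..<real (Suc i) * \<Delta>}) z \<le> D" for i
    proof -
      have "payoff (indicator {real i * \<Delta>..<real (Suc i) * \<Delta>}) z
          \<le> payoff (indicator {real i * \<Delta>..real i * \<Delta> + \<Delta>}) z"
        using integral_indicator_atLeastLessThan integral_indicator_atLeastAtMost Dpos
        by (intro payoff_mono z(1)) (auto simp: indicator_def algebra_simps)
      also have "\<dots> \<le> \<Delta> * (U (z 0) + \<epsilon>) + A0" using A0[OF z(1), of "real i * \<Delta>" \<Delta>] Dpos by simp
      finally show ?thesis using A z(2) by (simp add: D_def)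
    qed
    have "payoff (weight \<rho>) z \<le> D * (\<rho> 0 + 1 / \<Delta>) - \<rho> T * (real n * D - F)
        + integral\<^sup>L lebesgue (\<lambda>t. indicator {real Q..} t * weight \<mu> t)"
    proof -
      have "n \<le> m" "0 < m" using n1 by (simp_all add: m_def Q_def)
      from payoff_antitone_le_grid_bound[OF r Dpos z(1) this cell] show ?thesis
        using integral_tail_rho_scale[OF mu(1) lpos, of "real Q"] by (simp add: nD mD \<rho>_def F_def)
    qed
    moreover have "D * (\<rho> 0 + 1 / \<Delta>) = (U \<omega> + \<epsilon>) * (\<mu> 0 / real n + 1) + A * l * (\<mu> 0 + real n)"
      using lT n1 Tpos by (simp add: D_def \<rho>_def rho_scale_def \<Delta>_def l_def field_simps)
    moreover have "(U \<omega> + \<epsilon>) * (\<mu> 0 / real n + 1) \<le> U \<omega> + \<kappa>/6 + \<kappa>/6"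
    proof -
      have "(U \<omega> + \<epsilon>) * (\<mu> 0 / real n) \<le> 2 * (\<mu> 0 / real n)"
        using U1[of \<omega>] U0[of \<omega>] \<epsilon> m00 n1 by (intro mult_right_mono) auto
      then show ?thesis using nb \<epsilon> by (simp add: distrib_left)
    qed
    moreover have "A * l * (\<mu> 0 + real n) \<le> \<kappa>/6"
    proof -
      have pos: "6 * (A + 1) * (\<mu> 0 + real n + 1) > 0" using A m00 by (simp add: add_nonneg_pos)
      have "l * (6 * (A + 1) * (\<mu> 0 + real n + 1)) < \<kappa>"
        using ll1 pos by (simp add: l1_def pos_less_divide_eq)
      moreover have "6 * (A * l * (\<mu> 0 + real n)) \<le> l * (6 * (A + 1) * (\<mu> 0 + real n + 1))"
      proof -
        have "A * (\<mu> 0 + real n) \<le> (A + 1) * (\<mu> 0 + real n + 1)" using A m00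
          by (intro mult_mono) auto
        then have "l * (6 * (A * (\<mu> 0 + real n))) \<le> l * (6 * ((A + 1) * (\<mu> 0 + real n + 1)))"
          using lpos by (intro mult_left_mono) auto
        then show ?thesis by (simp only: mult_ac)
      qed
      ultimately show ?thesis by linarith
    qed
    ultimately have Jup: "payoff (weight \<rho>) z \<le> U \<omega> + 2 * \<kappa> / 3 - \<rho> T * (real n * D - F)"
      using tailQ by linarith
    \<comment> \<open>A near-optimal trajectory for \<rho> = \<mu> scaled by 1/T collects at least U \<omega> - \<kappa>/6; by
      Abel summation, a payoff below T (U \<omega> - e) on [0, T] would cap it at U \<omega> - \<kappa>/3.\<close>
    have "T * (U \<omega> - e) \<le> F"
    proof (rule ccontr)
      assume "\<not> T * (U \<omega> - e) \<le> F"
      moreover have "real n * D = (real n * \<Delta>) * (U \<omega> + \<epsilon>) + real n * A"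
        by (simp add: D_def algebra_simps)
      then have "real n * D = T * (U \<omega> + \<epsilon>) + real n * A" using nD by simp
      moreover have "0 \<le> real n * A" using A by simp
      ultimately have "T * (\<epsilon> + e) \<le> real n * D - F" by (simp add: algebra_simps)
      then have "\<rho> T * (T * (\<epsilon> + e)) \<le> \<rho> T * (real n * D - F)"
        using r(1) Tpos by (intro mult_left_mono) (auto simp: densities_iff_weight)
      moreover have "\<rho> T * (T * (\<epsilon> + e)) = \<mu> 1 * (\<epsilon> + e)"
        using lT by (simp add: \<rho>_def rho_scale_def mult.assoc[symmetric] mult.commute[of l])
      moreover have "\<kappa> \<le> \<mu> 1 * (\<epsilon> + e)" using mpos \<epsilon> by (simp add: \<kappa>_def distrib_left)
      ultimately show False using Jup Jlow \<kappa> by linarith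
    qed
    then show "\<exists>z\<in>K. z 0 = \<omega> \<and> T * (U \<omega> - e) \<le> payoff (indicator {0..T}) z"
      using z by (auto simp: F_def)
  qed
qed

lemma cesaro_limit_imp_scaled_limit:
  assumes u: "cesaro_limit U" "\<mu> \<in> densities" "piecewise_continuous_pos \<mu>"
  shows "scaled_limit \<mu> U"
  using cesaro_limit_bounds[OF u(1)] u(2,3)
  by (intro window_long_run_imp_scaled_limit cesaro_limit_window_bound[OF u(1)]
        cesaro_limit_long_run_lower_bound[OF u(1)])

lemma scaled_limit_varpi_1_imp_cesaro_limit:
  assumes "scaled_limit (varpi 1) U" shows "cesaro_limit U"
proof -
  have ev: "eventually (\<lambda>l. V (rho_scale (varpi 1) l) = V (varpi (inverse l))) (at_right (0::real))"
    using eventually_at_right_less[of 0] by eventually_elim (simp add: rho_scale_varpi_1 divide_inverse)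
  have "uniform_limit UNIV (\<lambda>l. V (varpi (inverse l))) U (at_right 0)"
    using filterlim_cong[OF refl refl ev] assms by simp
  then show ?thesis by (simp add: filterlim_at_top_to_right)
qed


lemma scaled_limit_imp_cesaro_limit:
  assumes "\<mu> \<in> densities" "antitone_nonneg \<mu>" "\<mu> 1 > 0" "scaled_limit \<mu> U" shows "cesaro_limit U"
  by (rule window_long_run_imp_cesaro_limit[OF scaled_limit_window_bound[OF assms(1,2,4)] scaled_limit_long_run_lower_bound[OF assms scaled_limit_window_bound[OF assms(1,2,4)]]])


lemma shift_limit_iff_scaled_limit:
  assumes pd: "power_density \<rho>"
  shows "uniform_limit UNIV (\<lambda>T. V (rho_shift \<rho> T)) U at_top \<longleftrightarrow> scaled_limit \<rho> U"
proof -
  obtain \<alpha> \<beta> \<gamma> where p: "\<alpha> > 0" "\<beta> > 0" "\<gamma> > 0" "\<forall>t\<ge>0. \<rho> t = (\<alpha> + \<beta> * t) powr (- \<gamma>)"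
    using pd by (auto simp: power_density_def)
  have veq: "V (rho_shift \<rho> T) = V (rho_scale \<rho> (\<alpha> / (\<alpha> + \<beta> * T)))" if "T > 0" for T
    using rho_shift_power_density[OF pd p that] by (intro val_cong) auto
  show ?thesis
  proof
    assume sh: "uniform_limit UNIV (\<lambda>T. V (rho_shift \<rho> T)) U at_top"
    define h where "h l = \<alpha> * (1 / l - 1) / \<beta>" for l :: real
    have hlim: "filterlim h at_top (at_right 0)"
    proof -
      have e: "h = (\<lambda>l. (- \<alpha> / \<beta>) + (\<alpha> / \<beta>) * inverse l)"
        using p by (auto simp: h_def fun_eq_iff field_simps)
      have "filterlim (\<lambda>l. (\<alpha> / \<beta>) * inverse l) at_top (at_right (0::real))"
        using p by (intro filterlim_tendsto_pos_mult_at_top[OF tendsto_const] filterlim_inverse_at_top_right) auto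
      then show ?thesis unfolding e by (intro filterlim_tendsto_add_at_top[OF tendsto_const])
    qed
    have lim1: "uniform_limit UNIV (\<lambda>l. V (rho_shift \<rho> (h l))) U (at_right 0)"
      using filterlim_compose[OF sh hlim] by simp
    have ev1: "eventually (\<lambda>l. V (rho_shift \<rho> (h l)) = V (rho_scale \<rho> l)) (at_right 0)"
      unfolding eventually_at_right_field
    proof (intro exI[of _ 1] conjI allI impI)
      fix l :: real assume l: "0 < l" "l < 1"
      have hpos: "h l > 0" using p l by (simp add: h_def)
      have "\<alpha> / (\<alpha> + \<beta> * h l) = l" using p l by (simp add: h_def field_simps)
      then show "V (rho_shift \<rho> (h l)) = V (rho_scale \<rho> l)" using veq[OF hpos] by simp
    qed simp
    show "scaled_limit \<rho> U" by (rule iffD1[OF filterlim_cong[OF refl refl ev1] lim1])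
  next
    assume cc: "scaled_limit \<rho> U"
    have llim: "filterlim (\<lambda>T. \<alpha> / (\<alpha> + \<beta> * T)) (at_right 0) at_top"
    proof (rule tendsto_imp_filterlim_at_right)
      have "filterlim (\<lambda>T. \<alpha> + \<beta> * T) at_top at_top"
        using p by (intro filterlim_tendsto_add_at_top[OF tendsto_const] filterlim_tendsto_pos_mult_at_top[OF tendsto_const] filterlim_ident) auto
      then show "((\<lambda>T. \<alpha> / (\<alpha> + \<beta> * T)) \<longlongrightarrow> 0) at_top"
        by (intro tendsto_divide_0[OF tendsto_const] filterlim_at_top_imp_at_infinity)
      show "\<forall>\<^sub>F T in at_top. 0 < \<alpha> / (\<alpha> + \<beta> * T)"
        using eventually_gt_at_top[of 0] by eventually_elim (use p in \<open>auto intro!: divide_pos_pos add_pos_pos\<close>)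
    qed
    have lim2: "uniform_limit UNIV (\<lambda>T. V (rho_scale \<rho> (\<alpha> / (\<alpha> + \<beta> * T)))) U at_top"
      using filterlim_compose[OF cc llim] by simp
    have ev2: "eventually (\<lambda>T. V (rho_scale \<rho> (\<alpha> / (\<alpha> + \<beta> * T))) = V (rho_shift \<rho> T)) at_top"
      using eventually_gt_at_top[of 0] by eventually_elim (simp add: veq)
    show "uniform_limit UNIV (\<lambda>T. V (rho_shift \<rho> T)) U at_top"
      by (rule iffD1[OF filterlim_cong[OF refl refl ev2] lim2])
  qed
qed


lemma cesaro_limit_iff_scaled_limits:
  "cesaro_limit U \<longleftrightarrow> (\<forall>\<mu>\<in>densities. piecewise_continuous_pos \<mu> \<longrightarrow> scaled_limit \<mu> U)"
  using cesaro_limit_imp_scaled_limit varpi_in_densities[of 1] piecewise_continuous_pos_varpi_1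
    scaled_limit_varpi_1_imp_cesaro_limit by auto

lemma cesaro_limit_iff_scaled_limit:
  assumes "\<mu> \<in> densities" "antitone_nonneg \<mu>" "\<mu> 1 > 0" "piecewise_continuous_pos \<mu>"
  shows "cesaro_limit U \<longleftrightarrow> scaled_limit \<mu> U"
  using assms cesaro_limit_imp_scaled_limit scaled_limit_imp_cesaro_limit by blast

lemma cesaro_limit_iff_pi_exp_limit:
  "cesaro_limit U \<longleftrightarrow> uniform_limit UNIV (\<lambda>l. V (pi_exp l)) U (at_right 0)"
proof -
  have "pi_exp 1 1 > 0" by (simp add: pi_exp_def)
  from cesaro_limit_iff_scaled_limit[OF pi_exp_1_in_densities antitone_nonneg_pi_exp_1 this
      piecewise_continuous_pos_pi_exp_1]
  show ?thesis by (simp only: rho_scale_pi_exp_1)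
qed

lemma cesaro_limit_iff_shift_limit:
  assumes pd: "power_density \<rho>"
  shows "cesaro_limit U \<longleftrightarrow> uniform_limit UNIV (\<lambda>T. V (rho_shift \<rho> T)) U at_top"
proof -
  have "\<rho> 1 > 0" by (rule power_density_pos[OF pd]) simp
  from cesaro_limit_iff_scaled_limit[OF power_density_in_densities[OF pd]
      power_density_antitone_nonneg[OF pd] this power_density_piecewise_continuous_pos[OF pd]]
  show ?thesis using shift_limit_iff_scaled_limit[OF pd] by simp
qed
end

theorem corollary1:
  fixes K :: "(real \<Rightarrow> 'w) set" and g :: "'w \<Rightarrow> real"
  assumes g_range: "\<And>\<omega>. 0 \<le> g \<omega> \<and> g \<omega> \<le> 1"
    and g_meas: "\<And>z. z \<in> K \<Longrightarrow> set_borel_measurable lebesgue {0..} (\<lambda>t. g (z t))"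
    and start: "\<And>\<omega>. \<exists>z\<in>K. z 0 = \<omega>"
    and dpp: "\<And>\<omega> \<rho> T. \<rho> \<in> densities \<Longrightarrow> T > 0 \<Longrightarrow>
       val K g \<rho> \<omega> =
         (SUP z \<in> {z \<in> K. z 0 = \<omega>}.
            (LINT t:{0..T}|lebesgue. \<rho> t * g (z t)) +
            (SUP z1 \<in> {z1 \<in> K. z1 0 = z T}. (LINT t:{0..}|lebesgue. \<rho> (t + T) * g (z1 t))))"
  shows
   "(\<forall>U :: 'w \<Rightarrow> real.
      let c = (\<forall>\<mu>\<in>densities. piecewise_continuous_pos \<mu> \<longrightarrow>
                 uniform_limit UNIV (\<lambda>l. val K g (rho_scale \<mu> l)) U (at_right 0));
          u = uniform_limit UNIV (\<lambda>T. val K g (varpi T)) U at_top;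
          e = uniform_limit UNIV (\<lambda>l. val K g (pi_exp l)) U (at_right 0);
          p = (\<exists>\<rho>. power_density \<rho> \<and>
                 uniform_limit UNIV (\<lambda>T. val K g (rho_shift \<rho> T)) U at_top);
          q = (\<forall>\<rho>. power_density \<rho> \<longrightarrow>
                 uniform_limit UNIV (\<lambda>T. val K g (rho_shift \<rho> T)) U at_top)
      in (c \<longleftrightarrow> u) \<and> (u \<longleftrightarrow> e) \<and> (e \<longleftrightarrow> p) \<and> (p \<longleftrightarrow> q))
    \<and>
    (\<forall>\<mu> \<rho>. \<mu> \<in> densities \<and> piecewise_continuous_pos \<mu> \<and> power_density \<rho> \<longrightarrow>
      ((\<exists>U. uniform_limit UNIV (\<lambda>T. val K g (varpi T)) U at_top) \<or>
       (\<exists>U. uniform_limit UNIV (\<lambda>l. val K g (pi_exp l)) U (at_right 0)) \<or>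
       (\<exists>U. uniform_limit UNIV (\<lambda>T. val K g (rho_shift \<rho> T)) U at_top)) \<longrightarrow>
      (\<exists>U :: 'w \<Rightarrow> real.
         uniform_limit UNIV (\<lambda>T. val K g (varpi T)) U at_top \<and>
         uniform_limit UNIV (\<lambda>l. val K g (pi_exp l)) U (at_right 0) \<and>
         (\<forall>\<rho>'. power_density \<rho>' \<longrightarrow>
            uniform_limit UNIV (\<lambda>T. val K g (rho_shift \<rho>' T)) U at_top) \<and>
         (\<forall>\<mu>'\<in>densities. piecewise_continuous_pos \<mu>' \<longrightarrow>
            uniform_limit UNIV (\<lambda>l. val K g (rho_scale \<mu>' l)) U (at_right 0))))"
proof -
  interpret dpp_problem K g
    using assms by unfold_locales auto
  obtain \<rho>0 where \<rho>0: "power_density \<rho>0" using power_density_exists by blast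
  show ?thesis
    unfolding Let_def
    using cesaro_limit_iff_scaled_limits cesaro_limit_iff_pi_exp_limit cesaro_limit_iff_shift_limit \<rho>0
    by blast
qed

end
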